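(* Let $S$ be a finite tree and $v$ a vertex of $S$. Let $T$ be the multigraph obtained from $S$ by gluing all leaves of $S$, except $v$ in case $v$ is a leaf, into a single vertex $\partial$, which is the boundary vertex of $T$. Let $Y$ be the loop contracting random walk on $(T,\partial)$ started at $v$ and $X$ the simple random walk on $T$ started at $v$. Then $$\mathbb{P}\big(\tau^{Y}_\partial<\tau^{Y}_{v,+}\big)\ \ge\ \mathbb{P}\big(\tau^{X}_\partial<\tau^{X}_{v,+}\big).$$
   Context: Simple random walk on a multigraph: at each step move along an outgoing oriented edge chosen uniformly at random, counting multiplicities. $\tau^X_\partial$ is the first hitting time of $\partial$ and $\tau^X_{v,+}$ the first time $t\ge1$ with $X_t=v$. Contraction of an oriented cycle $C$: remove the vertices of $C$ and all oriented edges with both endpoints in $C$, add a new vertex $v_C$, and replace each oriented edge with exactly one endpoint in $C$ by the edge with that endpoint replaced by $v_C$. Loop contracting random walk (LCRW) on $(G,\partial)$ started at $x\ne\partial$: a sequence $(G_i,P_i,X_i)$ with $G_0=G$, $P_0$ the empty path at $x$, $X_0=x$; at each step choose uniformly at random (counting multiplicity) an outgoing oriented edge $\vec e$ of $X_i$ in $G_i$; if the head of $\vec e$ is a vertex $y$ of the simple path $P_i$, contract the cycle formed by the part of $P_i$ from $y$ to $X_i$ and $\vec e$ to get $G_{i+1}$, truncate $P_i$ at $y$ to get $P_{i+1}$, and set $X_{i+1}=v_C$; otherwise $G_{i+1}=G_i$, $P_{i+1}$ is $P_i$ extended by $\vec e$, $X_{i+1}$ is the head of $\vec e$; terminate when $X_{i+1}=\partial$.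 For the LCRW $Y$ started at $v$, $\tau^Y_\partial$ is the time at which it reaches $\partial$, and $\tau^Y_{v,+}$ is the first step at which the chosen edge has head $v$ (i.e. the walk returns to $v$; before this time $v$ has not been part of any contracted cycle). *)

theory Defs
  imports "HOL-Probability.Probability"
begin

definition simple_graph :: "'a set \<Rightarrow> ('a \<Rightarrow> 'a \<Rightarrow> bool) \<Rightarrow> bool" where
  "simple_graph V E \<longleftrightarrow> finite V \<and> (\<forall>x y. E x y \<longrightarrow> x \<in> V \<and> y \<in> V \<and> x \<noteq> y \<and> E y x)"

definition is_cycle :: "('a \<Rightarrow> 'a \<Rightarrow> bool) \<Rightarrow> 'a list \<Rightarrow> bool" where
  "is_cycle E xs \<longleftrightarrow> 3 \<le> length xs \<and> distinct xs \<and>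
     (\<forall>i. Suc i < length xs \<longrightarrow> E (xs ! i) (xs ! Suc i)) \<and> E (last xs) (hd xs)"

definition finite_tree :: "'a set \<Rightarrow> ('a \<Rightarrow> 'a \<Rightarrow> bool) \<Rightarrow> bool" where
  "finite_tree V E \<longleftrightarrow> simple_graph V E \<and> V \<noteq> {} \<and>
     (\<forall>x\<in>V. \<forall>y\<in>V. E\<^sup>*\<^sup>* x y) \<and> \<not> (\<exists>xs. is_cycle E xs)"

definition is_leaf :: "('a \<Rightarrow> 'a \<Rightarrow> bool) \<Rightarrow> 'a \<Rightarrow> bool" where
  "is_leaf E x \<longleftrightarrow> card {y. E x y} = 1"

text \<open>Vertices of T are of type 'a option; None is the boundary vertex (all leaves except v glued).
  Oriented edges of T are identified with the oriented edges (x,y) of S (multiplicities counted).\<close>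

definition glue :: "('a \<Rightarrow> 'a \<Rightarrow> bool) \<Rightarrow> 'a \<Rightarrow> 'a \<Rightarrow> 'a option" where
  "glue E v x = (if is_leaf E x \<and> x \<noteq> v then None else Some x)"

definition T_edges :: "('a \<Rightarrow> 'a \<Rightarrow> bool) \<Rightarrow> ('a \<times> 'a) set" where
  "T_edges E = {(x, y). E x y}"

definition T_tail :: "('a \<Rightarrow> 'a \<Rightarrow> bool) \<Rightarrow> 'a \<Rightarrow> 'a \<times> 'a \<Rightarrow> 'a option" where
  "T_tail E v e = glue E v (fst e)"

definition T_head :: "('a \<Rightarrow> 'a \<Rightarrow> bool) \<Rightarrow> 'a \<Rightarrow> 'a \<times> 'a \<Rightarrow> 'a option" where
  "T_head E v e = glue E v (snd e)"

text \<open>Run s: still running; Esc: reached the boundary before returning to the start;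
  Ret: returned to the start before reaching the boundary.\<close>
datatype 's wstate = Run 's | Esc | Ret

text \<open>Multigraph: finite set Ed of oriented edge identifiers with tail tlf and head hdf.\<close>

definition srw_step ::
  "'e set \<Rightarrow> ('e \<Rightarrow> 'v) \<Rightarrow> ('e \<Rightarrow> 'v) \<Rightarrow> 'v \<Rightarrow> 'v \<Rightarrow> 'v wstate \<Rightarrow> 'v wstate pmf" where
  "srw_step Ed tlf hdf v bd s = (case s of
     Run x \<Rightarrow>
       (let out = {e \<in> Ed. tlf e = x} in
        if out = {} then return_pmf s else
        map_pmf (\<lambda>e. if hdf e = v then Ret else if hdf e = bd then Esc else Run (hdf e))
                (pmf_of_set out))
   | _ \<Rightarrow> return_pmf s)"

text \<open>LCRW state: (remaining edges R, block map blk sending each original vertex to the vertex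
  of the current graph containing it -- a contracted vertex v_C is the union of the blocks of C --,
  simple path P as a list of current vertices, whose last element is the current position).\<close>

definition lcrw_step ::
  "'e set \<Rightarrow> ('e \<Rightarrow> 'v) \<Rightarrow> ('e \<Rightarrow> 'v) \<Rightarrow> 'v \<Rightarrow> 'v \<Rightarrow>
   ('e set \<times> ('v \<Rightarrow> 'v set) \<times> 'v set list) wstate \<Rightarrow>
   ('e set \<times> ('v \<Rightarrow> 'v set) \<times> 'v set list) wstate pmf" where
  "lcrw_step Ed tlf hdf v bd s = (case s of
     Run (R, blk, P) \<Rightarrow>
       (let out = {e \<in> R. blk (tlf e) = last P} in
        if out = {} then return_pmf s else
        map_pmf (\<lambda>e. let h = blk (hdf e) in
            if h = {v} then Ret
            else if h = {bd} then Esc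
            else if h \<in> set P then
              (let C = set (dropWhile (\<lambda>b. b \<noteq> h) P);
                   vC = \<Union>C
               in Run ({e' \<in> R. \<not> (blk (tlf e') \<in> C \<and> blk (hdf e') \<in> C)},
                       (\<lambda>x. if blk x \<in> C then vC else blk x),
                       takeWhile (\<lambda>b. b \<noteq> h) P @ [vC]))
            else Run (R, blk, P @ [h]))
          (pmf_of_set out))
   | _ \<Rightarrow> return_pmf s)"

definition escape_prob :: "('s wstate \<Rightarrow> 's wstate pmf) \<Rightarrow> 's \<Rightarrow> real" where
  "escape_prob step s0 = (SUP n. pmf (((\<lambda>p. bind_pmf p step) ^^ n) (return_pmf (Run s0))) Esc)"

definition srw_escape :: "'e set \<Rightarrow> ('e \<Rightarrow> 'v) \<Rightarrow> ('e \<Rightarrow> 'v) \<Rightarrow> 'v \<Rightarrow> 'v \<Rightarrow> real" where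
  "srw_escape Ed tlf hdf v bd = escape_prob (srw_step Ed tlf hdf v bd) v"

definition lcrw_escape :: "'e set \<Rightarrow> ('e \<Rightarrow> 'v) \<Rightarrow> ('e \<Rightarrow> 'v) \<Rightarrow> 'v \<Rightarrow> 'v \<Rightarrow> real" where
  "lcrw_escape Ed tlf hdf v bd = escape_prob (lcrw_step Ed tlf hdf v bd) (Ed, (\<lambda>x. {x}), [{v}])"

end

(*
  Root the tree at v. For a vertex b other than v, let q b be the probability that the simple
  random walk from b reaches the boundary inside the subtree of b before it visits the parent
  of b: q b = 1 at the glued leaves, and q b = S / (1 + S) where S is the sum of q over the
  children of b. Off v, the probability of reaching the boundary before v is the harmonic
  function 1 - prod (1 - q a) over the path from v to the current vertex, so the simple random
  walk escapes from v with probability at most Q, the mean of q over the neighbours of v.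

  A state of the loop contracting walk is a path of blocks {v} = B_0, B_1, ..., B_k in which each
  B_i (i > 0) is a subtree hanging below B_(i-1); write S(B) for the total q of the children
  reached by the remaining edges leaving B. Then 1 - prod_(i>0) (1 - S(B_i) / (1 + S(B_i))),
  and Q at the start, is a submartingale: a step into a child y multiplies the product by
  1 - q y, while a step from the root r of B_k back to B_(k-1) merges the two blocks without
  decreasing S(B_(k-1)), because q r <= S(B_k); on average the two effects balance. Every
  step removes an edge or a vertex, so the walk stops in bounded time and its escape
  probability is at least Q.
*)
theory Submission
  imports Defs
begin

section \<open>Escape probabilities of absorbing chains\<close>

definition escape_within :: "('s wstate \<Rightarrow> 's wstate pmf) \<Rightarrow> nat \<Rightarrow> 's wstate \<Rightarrow> real" where
  "escape_within step n s = pmf (((\<lambda>p. bind_pmf p step) ^^ n) (return_pmf s)) Esc"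

lemma funpow_bind_pmf:
  fixes step :: "'a \<Rightarrow> 'a pmf"
  shows "((\<lambda>p. bind_pmf p step) ^^ n) (bind_pmf p f)
    = bind_pmf p (\<lambda>x. ((\<lambda>p. bind_pmf p step) ^^ n) (f x))"
proof (induction n arbitrary: p f)
  case 0
  show ?case by simp
next
  case (Suc n)
  have "((\<lambda>p. bind_pmf p step) ^^ Suc n) (bind_pmf p f)
      = ((\<lambda>p. bind_pmf p step) ^^ n) (bind_pmf p (\<lambda>x. bind_pmf (f x) step))"
    by (simp add: funpow_Suc_right bind_assoc_pmf del: funpow.simps)
  also have "\<dots> = bind_pmf p (\<lambda>x. ((\<lambda>p. bind_pmf p step) ^^ n) (bind_pmf (f x) step))"
    by (rule Suc.IH)
  finally show ?case by (simp add: funpow_Suc_right del: funpow.simps)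
qed

lemma escape_within_0: "escape_within step 0 s = (if s = Esc then 1 else 0)"
  by (simp add: escape_within_def pmf_return)

lemma escape_within_Suc:
  "escape_within step (Suc n) s = measure_pmf.expectation (step s) (escape_within step n)"
proof -
  have "((\<lambda>p. bind_pmf p step) ^^ Suc n) (return_pmf s)
      = ((\<lambda>p. bind_pmf p step) ^^ n) (bind_pmf (step s) return_pmf)"
    by (simp add: funpow_Suc_right bind_return_pmf bind_return_pmf' del: funpow.simps)
  also have "\<dots> = bind_pmf (step s) (\<lambda>t. ((\<lambda>p. bind_pmf p step) ^^ n) (return_pmf t))"
    by (rule funpow_bind_pmf)
  finally show ?thesis by (simp only: escape_within_def[abs_def] pmf_bind)
qed

lemma escape_within_absorbing:
  assumes "step s = return_pmf s"
  shows "escape_within step n s = (if s = Esc then 1 else 0)"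
  using assms by (induction n) (simp_all add: escape_within_0 escape_within_Suc)

lemma escape_within_le_1: "escape_within step n s \<le> 1"
  by (simp add: escape_within_def pmf_le_1)

lemma expectation_mono_finite_support:
  assumes "finite (set_pmf p)" and "\<And>x. x \<in> set_pmf p \<Longrightarrow> f x \<le> g x"
  shows "measure_pmf.expectation p f \<le> measure_pmf.expectation p (g :: _ \<Rightarrow> real)"
  using assms
    by (intro integral_mono_AE) (auto simp: integrable_measure_pmf_finite AE_measure_pmf_iff)

lemma escape_within_le_superharmonic:
  assumes "step Esc = return_pmf Esc" and "step Ret = return_pmf Ret"
    and "1 \<le> H Esc" and "0 \<le> H Ret"
    and closed: "\<And>s t. I s \<Longrightarrow> Run t \<in> set_pmf (step (Run s)) \<Longrightarrow> I t"
    and finite: "\<And>s. I s \<Longrightarrow> finite (set_pmf (step (Run s)))"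
    and nonneg: "\<And>s. I s \<Longrightarrow> 0 \<le> H (Run s)"
    and super: "\<And>s. I s \<Longrightarrow> measure_pmf.expectation (step (Run s)) H \<le> H (Run s)"
    and "I s"
  shows "escape_within step n (Run s) \<le> H (Run s)"
  using \<open>I s\<close>
proof (induction n arbitrary: s)
  case 0
  then show ?case by (simp add: escape_within_0 nonneg)
next
  case (Suc n)
  have "escape_within step n a \<le> H a" if "a \<in> set_pmf (step (Run s))" for a
    using that Suc assms(1-4) closed[OF Suc.prems]
      by (cases a) (simp_all add: escape_within_absorbing)
  then have "escape_within step (Suc n) (Run s) \<le> measure_pmf.expectation (step (Run s)) H"
    unfolding escape_within_Suc by (rule expectation_mono_finite_support[OF finite[OF Suc.prems]])
  also have "\<dots> \<le> H (Run s)" using super[OF Suc.prems] .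
  finally show ?case .
qed

lemma escape_prob_le_superharmonic:
  assumes "step Esc = return_pmf Esc" and "step Ret = return_pmf Ret"
    and "1 \<le> H Esc" and "0 \<le> H Ret"
    and "\<And>s t. I s \<Longrightarrow> Run t \<in> set_pmf (step (Run s)) \<Longrightarrow> I t"
    and "\<And>s. I s \<Longrightarrow> finite (set_pmf (step (Run s)))"
    and "\<And>s. I s \<Longrightarrow> 0 \<le> H (Run s)"
    and "\<And>s. I s \<Longrightarrow> measure_pmf.expectation (step (Run s)) H \<le> H (Run s)"
    and "I s0"
  shows "escape_prob step s0 \<le> H (Run s0)"
  unfolding escape_prob_def
  using escape_within_le_superharmonic[of step H I, OF assms]
    by (intro cSUP_least) (auto simp: escape_within_def)

text \<open>Here the rank \<open>steps_left\<close> bounds the length of every run, which replaces the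
  nonnegativity of \<open>H\<close> needed above.\<close>

lemma escape_within_ge_subharmonic:
  assumes "step Esc = return_pmf Esc" and "step Ret = return_pmf Ret"
    and "H Esc \<le> 1" and "H Ret \<le> 0"
    and closed: "\<And>s t. I s \<Longrightarrow> Run t \<in> set_pmf (step (Run s)) \<Longrightarrow> I t \<and> steps_left t < steps_left s"
    and finite: "\<And>s. I s \<Longrightarrow> finite (set_pmf (step (Run s)))"
    and sub: "\<And>s. I s \<Longrightarrow> H (Run s) \<le> measure_pmf.expectation (step (Run s)) H"
    and "I s" and "steps_left s < n"
  shows "H (Run s) \<le> escape_within step n (Run s)"
  using \<open>I s\<close> \<open>steps_left s < n\<close>
proof (induction n arbitrary: s)
  case 0
  then show ?case by simp
next
  case (Suc n)
  have "H a \<le> escape_within step n a" if "a \<in> set_pmf (step (Run s))" for a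
  proof (cases a)
    case (Run t)
    then have "I t" and "steps_left t < n"
      using closed[OF Suc.prems(1)] that Suc.prems(2) by fastforce+
    then show ?thesis using Run Suc.IH by blast
  qed (use assms(1-4) in \<open>simp_all add: escape_within_absorbing\<close>)
  then have "measure_pmf.expectation (step (Run s)) H \<le> escape_within step (Suc n) (Run s)"
    unfolding escape_within_Suc
      by (rule expectation_mono_finite_support[OF finite[OF Suc.prems(1)]])
  with sub[OF Suc.prems(1)] show ?case by linarith
qed

lemma escape_prob_ge_subharmonic:
  assumes "step Esc = return_pmf Esc" and "step Ret = return_pmf Ret"
    and "H Esc \<le> 1" and "H Ret \<le> 0"
    and "\<And>s t. I s \<Longrightarrow> Run t \<in> set_pmf (step (Run s)) \<Longrightarrow> I t \<and> steps_left t < (steps_left s :: nat)"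
    and "\<And>s. I s \<Longrightarrow> finite (set_pmf (step (Run s)))"
    and "\<And>s. I s \<Longrightarrow> H (Run s) \<le> measure_pmf.expectation (step (Run s)) H"
    and "I s0"
  shows "H (Run s0) \<le> escape_prob step s0"
proof -
  have "H (Run s0) \<le> escape_within step (Suc (steps_left s0)) (Run s0)"
    by (rule escape_within_ge_subharmonic[of step H I steps_left, OF assms lessI])
  also have "\<dots> \<le> escape_prob step s0"
    unfolding escape_prob_def escape_within_def[symmetric]
    by (rule cSUP_upper) (auto intro: bdd_aboveI[where M = 1] simp: escape_within_le_1)
  finally show ?thesis .
qed

section \<open>Non-backtracking walks in a tree\<close>

fun non_backtracking :: "('a \<Rightarrow> 'a \<Rightarrow> bool) \<Rightarrow> 'a list \<Rightarrow> bool" where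
  "non_backtracking E (a # b # c # r) = (E a b \<and> a \<noteq> c \<and> non_backtracking E (b # c # r))"
| "non_backtracking E [a, b] = E a b"
| "non_backtracking E _ = True"

lemma non_backtracking_Cons:
  "non_backtracking E (a # xs) \<longleftrightarrow> non_backtracking E xs \<and> (xs \<noteq> [] \<longrightarrow> E a (hd xs)) \<and>
     (2 \<le> length xs \<longrightarrow> xs ! 1 \<noteq> a)"
  by (cases xs; cases "tl xs") auto

lemma non_backtracking_append:
  "non_backtracking E (xs @ ys) \<longleftrightarrow> non_backtracking E xs \<and> non_backtracking E ys \<and>
     (xs \<noteq> [] \<and> ys \<noteq> [] \<longrightarrow> E (last xs) (hd ys)) \<and>
     (2 \<le> length xs \<and> ys \<noteq> [] \<longrightarrow> last (butlast xs) \<noteq> hd ys) \<and>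
     (xs \<noteq> [] \<and> 2 \<le> length ys \<longrightarrow> ys ! 1 \<noteq> last xs)"
proof (induction xs)
  case Nil
  then show ?case by simp
next
  case (Cons a xs)
  show ?case
  proof (cases xs)
    case Nil
    then show ?thesis by (cases ys) (auto simp: non_backtracking_Cons)
  next
    case (Cons b zs)
    show ?thesis
    proof (cases zs)
      case Nil
      then show ?thesis using \<open>xs = b # zs\<close> Cons.IH by (cases ys) (auto simp: non_backtracking_Cons)
    next
      case (Cons c ws)
      then have "non_backtracking E (a # xs @ ys) \<longleftrightarrow> non_backtracking E (xs @ ys) \<and> E a b \<and> c \<noteq> a"
        and "non_backtracking E (a # xs) \<longleftrightarrow> non_backtracking E xs \<and> E a b \<and> c \<noteq> a"
        and "last (a # xs) = last xs" and "last (butlast (a # xs)) = last (butlast xs)"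
        using \<open>xs = b # zs\<close> by (simp_all add: non_backtracking_Cons)
      then show ?thesis using Cons.IH \<open>xs = b # zs\<close> Cons by (simp; blast)
    qed
  qed
qed

lemma non_backtracking_snoc:
  "non_backtracking E (xs @ [y]) \<longleftrightarrow> non_backtracking E xs \<and> (xs \<noteq> [] \<longrightarrow> E (last xs) y) \<and>
     (2 \<le> length xs \<longrightarrow> last (butlast xs) \<noteq> y)"
  by (simp add: non_backtracking_append)

lemma non_backtracking_appendD:
  "non_backtracking E (xs @ ys) \<Longrightarrow> non_backtracking E xs"
  "non_backtracking E (xs @ ys) \<Longrightarrow> non_backtracking E ys"
  by (simp_all add: non_backtracking_append)

lemma non_backtracking_butlast: "non_backtracking E xs \<Longrightarrow> non_backtracking E (butlast xs)"
  by (cases xs rule: rev_cases) (auto dest: non_backtracking_appendD)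

lemma non_backtracking_nth_edge:
  "non_backtracking E xs \<Longrightarrow> Suc i < length xs \<Longrightarrow> E (xs ! i) (xs ! Suc i)"
  by (induction xs arbitrary: i)
    (auto simp: non_backtracking_Cons hd_conv_nth nth_Cons split: nat.split)

lemma non_backtracking_nth_ne:
  "non_backtracking E xs \<Longrightarrow> Suc (Suc i) < length xs \<Longrightarrow> xs ! Suc (Suc i) \<noteq> xs ! i"
  by (induction xs arbitrary: i) (auto simp: non_backtracking_Cons nth_Cons split: nat.split)

lemma non_backtracking_rev:
  assumes "\<And>x y. E x y \<Longrightarrow> E y x"
  shows "non_backtracking E (rev xs) \<longleftrightarrow> non_backtracking E xs"
proof (induction xs)
  case Nil
  then show ?case by simp
next
  case (Cons a xs)
  have "2 \<le> length xs \<Longrightarrow> last (butlast (rev xs)) = xs ! 1"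
    by (cases xs; cases "tl xs") (auto simp: butlast_append)
  then show ?case
    using Cons assms by (auto simp: non_backtracking_snoc non_backtracking_Cons last_rev)
qed

lemma rev_nth_1:
  assumes "2 \<le> length xs"
  shows "rev xs ! 1 = last (butlast xs)"
proof -
  obtain zs z where xs: "xs = zs @ [z]" and "zs \<noteq> []"
    using assms by (cases xs rule: rev_cases) (auto simp: Suc_le_eq)
  then have "rev xs ! 1 = hd (rev zs)" by (simp add: hd_conv_nth)
  then show ?thesis using xs \<open>zs \<noteq> []\<close> by (simp add: hd_rev)
qed

lemma butlast_of_length_ge_2:
  assumes "2 \<le> length xs"
  shows "butlast xs \<noteq> []" "hd (butlast xs) = hd xs"
  using assms by (cases xs; cases "tl xs"; auto)+

locale rooted_tree =
  fixes V :: "'a set" and E :: "'a \<Rightarrow> 'a \<Rightarrow> bool" and v :: 'a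
  assumes tree: "finite_tree V E" and root_in_V: "v \<in> V" and two_le_card: "2 \<le> card V"
begin

lemma finite_V: "finite V"
  using tree by (simp add: finite_tree_def simple_graph_def)

lemma edgeD: "E x y \<Longrightarrow> x \<in> V \<and> y \<in> V \<and> x \<noteq> y \<and> E y x"
  using tree by (simp add: finite_tree_def simple_graph_def)

lemma edge_sym: "E x y \<Longrightarrow> E y x"
  using edgeD by blast

lemma no_cycle: "\<not> is_cycle E xs"
  using tree by (simp add: finite_tree_def)

lemma exists_neighbor:
  assumes "x \<in> V"
  shows "\<exists>y. E x y"
proof -
  have "\<not> V \<subseteq> {x}"
    using two_le_card finite_V card_mono[of "{x}" V] by auto
  then obtain w where "w \<in> V" "w \<noteq> x" by blast
  then have "E\<^sup>*\<^sup>* x w" "w \<noteq> x" using tree assms by (auto simp: finite_tree_def)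
  then show ?thesis by (cases rule: converse_rtranclpE) auto
qed

lemma finite_neighbors: "finite {y. E x y}"
  by (rule finite_subset[OF _ finite_V]) (auto dest: edgeD)

text \<open>A non-backtracking walk that revisits a vertex closes a cycle of length at least 3.\<close>

lemma non_backtracking_snoc_notin:
  assumes nb: "non_backtracking E (ys @ [z])" and "distinct ys"
  shows "z \<notin> set ys"
proof
  assume "z \<in> set ys"
  then obtain i where i: "i < length ys" "ys ! i = z" by (auto simp: in_set_conv_nth)
  consider "Suc i = length ys" | "Suc (Suc i) = length ys" | "Suc (Suc i) < length ys"
    using i by linarith
  then show False
  proof cases
    case 1
    then have "E z z" using non_backtracking_nth_edge[OF nb, of i] i by (simp add: nth_append)
    then show False using edgeD by blast
  next
    case 2
    then show False using non_backtracking_nth_ne[OF nb, of i] i by (simp add: nth_append)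
  next
    case 3
    have "is_cycle E (drop i ys)"
      unfolding is_cycle_def
    proof (intro conjI allI impI)
      show "3 \<le> length (drop i ys)" "distinct (drop i ys)" using 3 \<open>distinct ys\<close> by simp_all
      fix j assume "Suc j < length (drop i ys)"
      then have "Suc (i + j) < length ys" by simp
      then show "E (drop i ys ! j) (drop i ys ! Suc j)"
        using non_backtracking_nth_edge[OF nb, of "i + j"] by (simp add: nth_append)
    next
      have "ys \<noteq> []" using i by auto
      then have "E (last ys) z" using nb by (simp add: non_backtracking_snoc)
      then show "E (last (drop i ys)) (hd (drop i ys))" using i by (simp add: hd_drop_conv_nth)
    qed
    then show False using no_cycle by blast
  qed
qed

lemma non_backtracking_distinct: "non_backtracking E xs \<Longrightarrow> distinct xs"
  by (induction xs rule: rev_induct)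
    (auto dest: non_backtracking_appendD non_backtracking_snoc_notin)

lemma non_backtracking_join:
  assumes xs: "non_backtracking E (xs @ [x])" and ys: "non_backtracking E (ys @ [x])"
    and "xs \<noteq> []" "ys \<noteq> []" "last xs \<noteq> last ys"
  shows "non_backtracking E (xs @ x # rev ys)"
proof -
  have "non_backtracking E (rev ys)"
    using non_backtracking_appendD(1)[OF ys] non_backtracking_rev edge_sym by blast
  moreover have "E x (last ys)" and "2 \<le> length ys \<Longrightarrow> rev ys ! 1 \<noteq> x"
    using ys \<open>ys \<noteq> []\<close> rev_nth_1[of ys] by (auto simp: non_backtracking_snoc intro: edge_sym)
  ultimately have "non_backtracking E ((xs @ [x]) @ rev ys)"
    using xs assms(3-5) unfolding non_backtracking_append[of E "xs @ [x]"] by (simp add: hd_rev)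
  then show ?thesis by simp
qed

lemma distinct_hd_last: "distinct xs \<Longrightarrow> 2 \<le> length xs \<Longrightarrow> hd xs \<noteq> last xs"
  by (cases xs) (auto simp: hd_conv_nth last_conv_nth nth_eq_iff_index_eq)

text \<open>Where two non-backtracking walks with the same endpoints first differ (read backwards),
  they could be joined into a closed non-backtracking walk.\<close>

lemma non_backtracking_walk_unique:
  assumes "non_backtracking E xs" "non_backtracking E ys" "xs \<noteq> []" "ys \<noteq> []"
    and "hd xs = hd ys" "last xs = last ys"
  shows "xs = ys"
  using assms
proof (induction xs arbitrary: ys rule: rev_induct)
  case Nil
  then show ?case by simp
next
  case (snoc x xs)
  obtain ys' where ys: "ys = ys' @ [x]"
    using snoc.prems(4,6) by (cases ys rule: rev_cases) auto
  have dist: "distinct (xs @ [x])" "distinct ys"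
    using snoc.prems(1,2) non_backtracking_distinct by blast+
  consider "xs = []" | "ys' = []" | "xs \<noteq> []" "ys' \<noteq> []" "last xs = last ys'"
    | "xs \<noteq> []" "ys' \<noteq> []" "last xs \<noteq> last ys'"
    by blast
  then show ?case
  proof cases
    case 1
    then show ?thesis using snoc.prems(5) dist(2) distinct_hd_last[of ys] ys by (cases ys') auto
  next
    case 2
    then show ?thesis using snoc.prems(5) dist(1) distinct_hd_last[of "xs @ [x]"] ys
      by (cases xs) auto
  next
    case 3
    then have "xs = ys'"
      using snoc.prems(1,2,5) ys by (intro snoc.IH) (auto dest: non_backtracking_appendD)
    then show ?thesis using ys by simp
  next
    case 4
    let ?w = "xs @ x # rev ys'"
    have "non_backtracking E ?w"
      using non_backtracking_join[OF snoc.prems(1) _ 4(1,2,3)] snoc.prems(2) ys by simp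
    then have "distinct ?w" by (rule non_backtracking_distinct)
    moreover have "hd ?w = last ?w"
      using 4 snoc.prems(5) ys by (simp add: last_rev)
    moreover have "2 \<le> length ?w" using 4 by (simp add: Suc_le_eq)
    ultimately show ?thesis using distinct_hd_last by blast
  qed
qed

lemma exists_walk_from_root:
  assumes "x \<in> V"
  shows "\<exists>ws. non_backtracking E ws \<and> ws \<noteq> [] \<and> hd ws = v \<and> last ws = x"
proof -
  have "E\<^sup>*\<^sup>* v x" using tree root_in_V assms by (simp add: finite_tree_def)
  then show ?thesis
  proof (induction rule: rtranclp_induct)
    case base
    show ?case by (intro exI[of _ "[v]"]) simp
  next
    case (step x y)
    then obtain ws where ws: "non_backtracking E ws" "ws \<noteq> []" "hd ws = v" "last ws = x" by blast
    show ?case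
    proof (cases "2 \<le> length ws \<and> last (butlast ws) = y")
      case True
      then show ?thesis
        using ws non_backtracking_butlast butlast_of_length_ge_2[of ws]
        by (intro exI[of _ "butlast ws"]) auto
    next
      case False
      then show ?thesis
        using ws step.hyps(2) by (intro exI[of _ "ws @ [y]"]) (auto simp: non_backtracking_snoc)
    qed
  qed
qed

definition root_walk :: "'a \<Rightarrow> 'a list" where
  "root_walk x = (THE ws. non_backtracking E ws \<and> ws \<noteq> [] \<and> hd ws = v \<and> last ws = x)"

lemma root_walk:
  assumes "x \<in> V"
  shows "non_backtracking E (root_walk x)" "root_walk x \<noteq> []" "hd (root_walk x) = v"
    "last (root_walk x) = x"
proof -
  have "\<exists>!ws. non_backtracking E ws \<and> ws \<noteq> [] \<and> hd ws = v \<and> last ws = x"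
    using exists_walk_from_root[OF assms] non_backtracking_walk_unique by metis
  from theI'[OF this] show "non_backtracking E (root_walk x)" "root_walk x \<noteq> []"
    "hd (root_walk x) = v" "last (root_walk x) = x"
    unfolding root_walk_def by auto
qed

lemma root_walk_eqI:
  "non_backtracking E ws \<Longrightarrow> ws \<noteq> [] \<Longrightarrow> hd ws = v \<Longrightarrow> last ws = x \<Longrightarrow> x \<in> V \<Longrightarrow>
    root_walk x = ws"
  using non_backtracking_walk_unique root_walk by metis

lemma root_walk_root: "root_walk v = [v]"
  using root_walk_eqI[of "[v]" v] root_in_V by simp

lemma set_root_walk:
  assumes "x \<in> V"
  shows "set (root_walk x) \<subseteq> V"
proof
  fix y assume "y \<in> set (root_walk x)"
  then obtain i where i: "i < length (root_walk x)" "root_walk x ! i = y"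
    by (auto simp: in_set_conv_nth)
  show "y \<in> V"
  proof (cases "Suc i < length (root_walk x)")
    case True
    then show ?thesis
      using non_backtracking_nth_edge[OF root_walk(1)[OF assms] True] edgeD i by blast
  next
    case False
    then have "i = length (root_walk x) - 1" "root_walk x \<noteq> []" using i by auto
    then have "y = last (root_walk x)" using i by (simp add: last_conv_nth)
    then show ?thesis using root_walk(4) assms by simp
  qed
qed

text \<open>Orienting the tree away from the root \<open>v\<close>: \<open>child a b\<close> says that \<open>a\<close> is the
  parent of \<open>b\<close>.\<close>

definition child :: "'a \<Rightarrow> 'a \<Rightarrow> bool" where
  "child a b \<longleftrightarrow> a \<in> V \<and> b \<in> V \<and> root_walk b = root_walk a @ [b]"

definition depth :: "'a \<Rightarrow> nat" where
  "depth x = length (root_walk x)"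

lemma child_in_V: "child a b \<Longrightarrow> a \<in> V \<and> b \<in> V"
  by (simp add: child_def)

lemma child_edge: "child a b \<Longrightarrow> E a b"
  using root_walk[of a] root_walk(1)[of b] by (auto simp: child_def non_backtracking_snoc)

lemma depth_child: "child a b \<Longrightarrow> depth b = Suc (depth a)"
  by (simp add: child_def depth_def)

lemma depth_bounds:
  assumes "x \<in> V"
  shows "1 \<le> depth x" "depth x \<le> card V"
proof -
  show "1 \<le> depth x" using root_walk(2)[OF assms] by (simp add: depth_def Suc_le_eq)
  have "distinct (root_walk x)" using root_walk(1)[OF assms] by (rule non_backtracking_distinct)
  then show "depth x \<le> card V"
    unfolding depth_def using card_mono[OF finite_V set_root_walk[OF assms]]
      by (simp add: distinct_card)
qed

lemma child_unique: "child a b \<Longrightarrow> child a' b \<Longrightarrow> a = a'"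
  by (metis child_def root_walk(4) butlast_snoc)

lemma child_not_root: "child a b \<Longrightarrow> b \<noteq> v"
  using depth_child[of a b] depth_bounds(1)[of a] child_in_V[of a b] root_walk_root
  by (auto simp: depth_def)

lemma child_asym: "child a b \<Longrightarrow> \<not> child b a"
  using depth_child[of a b] depth_child[of b a] by auto

lemma edge_child_or_parent:
  assumes "E a b"
  shows "child a b \<or> child b a"
proof -
  have V: "a \<in> V" "b \<in> V" using edgeD assms by blast+
  note rw = root_walk[OF V(1)]
  show ?thesis
  proof (cases "2 \<le> length (root_walk a) \<and> last (butlast (root_walk a)) = b")
    case True
    then have "root_walk b = butlast (root_walk a)"
      using rw non_backtracking_butlast butlast_of_length_ge_2[of "root_walk a"] V
      by (intro root_walk_eqI) auto
    then have "child b a" using rw V by (metis child_def append_butlast_last_id)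
    then show ?thesis ..
  next
    case False
    then have "root_walk b = root_walk a @ [b]"
      using rw assms V by (intro root_walk_eqI) (auto simp: non_backtracking_snoc)
    then have "child a b" using V by (simp add: child_def)
    then show ?thesis ..
  qed
qed

lemma exists_parent:
  assumes "b \<in> V" "b \<noteq> v"
  shows "\<exists>a. child a b"
proof -
  note rw = root_walk[OF assms(1)]
  have "root_walk b \<noteq> [b]" using rw assms(2) by auto
  then obtain ws a where ws: "root_walk b = ws @ [a, b]"
    using rw(2,4) by (metis append_butlast_last_id append_Cons append_Nil append_assoc
        butlast.simps(2) last_ConsL rev_exhaust)
  have "root_walk a = ws @ [a]"
    using rw ws non_backtracking_appendD(1)[of E "ws @ [a]" "[b]"] set_root_walk[OF assms(1)]
    by (intro root_walk_eqI) (auto simp: hd_append)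
  then have "child a b" using ws assms set_root_walk[OF assms(1)] by (auto simp: child_def)
  then show ?thesis ..
qed

lemma root_child: "E v b \<Longrightarrow> child v b"
  using edge_child_or_parent child_not_root by blast

lemma finite_children: "finite {c. child b c}"
  by (rule finite_subset[OF _ finite_V]) (use child_in_V in blast)

end

section \<open>Subtree escape probabilities and the simple random walk\<close>

definition odds_prob :: "real \<Rightarrow> real" where
  "odds_prob s = s / (1 + s)"

lemma odds_prob_bounds: "0 \<le> s \<Longrightarrow> 0 \<le> odds_prob s \<and> odds_prob s \<le> 1"
  by (simp add: odds_prob_def)

lemma odds_prob_le_self: "0 \<le> s \<Longrightarrow> odds_prob s \<le> s"
  by (simp add: odds_prob_def divide_le_eq algebra_simps)

lemma odds_prob_mono: "0 \<le> s \<Longrightarrow> s \<le> t \<Longrightarrow> odds_prob s \<le> odds_prob t"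
  by (simp add: odds_prob_def divide_le_eq le_divide_eq algebra_simps)

lemma one_minus_odds_prob: "0 \<le> s \<Longrightarrow> (1 - odds_prob s) * (1 + s) = 1"
  by (simp add: odds_prob_def field_simps)

lemma prod_list_unit_interval:
  "(\<And>x. x \<in> set xs \<Longrightarrow> 0 \<le> x \<and> x \<le> 1) \<Longrightarrow> 0 \<le> prod_list xs \<and> prod_list xs \<le> (1::real)"
  by (induction xs) (auto intro: mult_le_one)

context rooted_tree
begin

abbreviation tail :: "'a \<times> 'a \<Rightarrow> 'a option" where
  "tail \<equiv> T_tail E v"

abbreviation head :: "'a \<times> 'a \<Rightarrow> 'a option" where
  "head \<equiv> T_head E v"

definition glued :: "'a \<Rightarrow> bool" where
  "glued x \<longleftrightarrow> is_leaf E x \<and> x \<noteq> v"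

lemma glue_eq: "glue E v x = (if glued x then None else Some x)"
  by (simp add: glue_def glued_def)

lemma tail_eq_Some: "tail e = Some x \<longleftrightarrow> fst e = x \<and> \<not> glued x"
  by (auto simp: T_tail_def glue_eq)

lemma head_eq_Some: "head e = Some x \<longleftrightarrow> snd e = x \<and> \<not> glued x"
  by (auto simp: T_head_def glue_eq)

lemma root_not_glued: "\<not> glued v"
  by (simp add: glued_def)

lemma parent_not_glued:
  assumes "child a b"
  shows "\<not> glued a"
proof
  assume "glued a"
  then obtain p where p: "child p a" using exists_parent child_in_V[OF assms]
    by (auto simp: glued_def)
  then have "{p, b} \<subseteq> {y. E a y}" and "p \<noteq> b"
    using assms child_edge edge_sym child_asym by blast+
  then have "card {p, b} \<le> card {y. E a y}" using card_mono[OF finite_neighbors] by blast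
  then have "2 \<le> card {y. E a y}" using \<open>p \<noteq> b\<close> by simp
  then show False using \<open>glued a\<close> by (simp add: glued_def is_leaf_def)
qed

lemma child_if_glued: "glued y \<Longrightarrow> E w y \<Longrightarrow> child w y"
  using edge_child_or_parent parent_not_glued by blast

lemma neighbors_eq_parent_children:
  assumes "child p x"
  shows "{y. E x y} = insert p {c. child x c}"
  using assms edge_child_or_parent child_unique child_edge edge_sym by blast

text \<open>\<open>subtree_escape b\<close> is the probability that the simple random walk started at a non-root
  vertex \<open>b\<close> reaches the boundary inside the subtree of \<open>b\<close> before visiting the parent of \<open>b\<close>.
  If \<open>b\<close> has \<open>k\<close> children and \<open>S\<close> is the sum of their escape probabilities, the first step
  gives \<open>q = (S + (k - S) q) / (k + 1)\<close>, that is \<open>q = S / (1 + S)\<close>. The recursion follows the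
  depth, so \<open>card V\<close> rounds of it reach a fixed point.\<close>

primrec subtree_escape_upto :: "nat \<Rightarrow> 'a \<Rightarrow> real" where
  "subtree_escape_upto 0 b = 0"
| "subtree_escape_upto (Suc n) b =
     (if glued b then 1 else odds_prob (\<Sum>c\<in>{c. child b c}. subtree_escape_upto n c))"

definition subtree_escape :: "'a \<Rightarrow> real" where
  "subtree_escape b = subtree_escape_upto (Suc (card V)) b"

lemma subtree_escape_upto_bounds: "0 \<le> subtree_escape_upto n b \<and> subtree_escape_upto n b \<le> 1"
  by (induction n arbitrary: b) (auto intro!: odds_prob_bounds sum_nonneg)

lemma subtree_escape_upto_stable:
  assumes "b \<in> V" and "card V + 1 - depth b \<le> n"
  shows "subtree_escape_upto n b = subtree_escape_upto (card V + 1 - depth b) b"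
  using assms
proof (induction n arbitrary: b)
  case 0
  then show ?case using depth_bounds[of b] by simp
next
  case (Suc n)
  define m where "m = card V - depth b"
  have m: "card V + 1 - depth b = Suc m"
    using depth_bounds(2)[OF Suc.prems(1)] by (simp add: m_def)
  have "subtree_escape_upto n c = subtree_escape_upto m c" if "child b c" for c
  proof -
    have "c \<in> V" using that child_in_V by blast
    moreover have "card V + 1 - depth c = m"
      using that depth_child[OF that] m depth_bounds(2)[OF \<open>c \<in> V\<close>] by linarith
    ultimately show ?thesis using Suc.IH[of c] Suc.prems(2) m by simp
  qed
  then show ?case unfolding m by simp
qed

lemma subtree_escape_bounds: "0 \<le> subtree_escape b" "subtree_escape b \<le> 1"
  unfolding subtree_escape_def using subtree_escape_upto_bounds by blast+

lemma subtree_escape_eq: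
  assumes "b \<in> V"
  shows "subtree_escape b =
    (if glued b then 1 else odds_prob (\<Sum>c\<in>{c. child b c}. subtree_escape c))"
proof -
  have "subtree_escape_upto (card V) c = subtree_escape c" if "child b c" for c
  proof -
    have "c \<in> V" using that child_in_V by blast
    then show ?thesis
      using subtree_escape_upto_stable[of c "card V"]
        subtree_escape_upto_stable[of c "Suc (card V)"]
        depth_bounds[of c] by (simp add: subtree_escape_def)
  qed
  then show ?thesis by (simp add: subtree_escape_def)
qed

lemma subtree_escape_glued: "glued b \<Longrightarrow> subtree_escape b = 1"
  by (simp add: subtree_escape_def)

lemma children_escape_nonneg: "0 \<le> (\<Sum>c\<in>A. subtree_escape c)"
  by (simp add: sum_nonneg subtree_escape_bounds)

text \<open>The probability that the simple random walk from \<open>x\<close> visits \<open>v\<close> before the boundary: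
  it has to leave every subtree on the way from \<open>x\<close> to \<open>v\<close> towards the root.\<close>

definition hit_root_prob :: "'a \<Rightarrow> real" where
  "hit_root_prob x = (\<Prod>a\<leftarrow>tl (root_walk x). 1 - subtree_escape a)"

lemma hit_root_prob_root: "hit_root_prob v = 1"
  by (simp add: hit_root_prob_def root_walk_root)

lemma hit_root_prob_child: "child x c \<Longrightarrow> hit_root_prob c = (1 - subtree_escape c) * hit_root_prob x"
  using root_walk(2)[of x] by (simp add: hit_root_prob_def child_def)

lemma hit_root_prob_bounds: "0 \<le> hit_root_prob x \<and> hit_root_prob x \<le> 1"
  unfolding hit_root_prob_def by (rule prod_list_unit_interval) (auto simp: subtree_escape_bounds)

definition root_escape :: real where
  "root_escape = (\<Sum>y\<in>{y. E v y}. subtree_escape y) / card {y. E v y}"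

lemma root_escape_nonneg: "0 \<le> root_escape"
  by (simp add: root_escape_def children_escape_nonneg)

lemma hit_root_prob_glued:
  assumes "glued y" "E x y"
  shows "hit_root_prob y = 0"
  using hit_root_prob_child[OF child_if_glued[OF assms]] subtree_escape_glued[OF assms(1)] by simp

lemma sum_neighbors_hit_root_prob:
  assumes "child p x" "\<not> glued x"
  shows "(\<Sum>y\<in>{y. E x y}. 1 - hit_root_prob y) = card {y. E x y} * (1 - hit_root_prob x)"
proof -
  define C where "C = (\<Sum>c\<in>{c. child x c}. subtree_escape c)"
  define k where "k = card {c. child x c}"
  have "p \<notin> {c. child x c}" using assms(1) child_asym by blast
  then have card: "card {y. E x y} = Suc k"
    unfolding neighbors_eq_parent_children[OF assms(1)] k_def using finite_children by simp
  have "subtree_escape x = odds_prob C"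
    using subtree_escape_eq child_in_V assms by (simp add: C_def)
  then have "(1 - subtree_escape x) * (1 + C) = 1"
    using one_minus_odds_prob[OF children_escape_nonneg] by (simp add: C_def)
  moreover have "(1 + C) * hit_root_prob x = ((1 - subtree_escape x) * (1 + C)) * hit_root_prob p"
    unfolding hit_root_prob_child[OF assms(1)] by (simp only: ac_simps)
  ultimately have hit_p: "hit_root_prob p = (1 + C) * hit_root_prob x" by simp
  have "(\<Sum>c\<in>{c. child x c}. 1 - hit_root_prob c) = k - (k - C) * hit_root_prob x"
    using hit_root_prob_child
    by (simp add: sum_subtractf sum.distrib left_diff_distrib sum_distrib_right C_def k_def)
  then have "(\<Sum>y\<in>{y. E x y}. 1 - hit_root_prob y)
      = (1 - (1 + C) * hit_root_prob x) + (k - (k - C) * hit_root_prob x)"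
    unfolding neighbors_eq_parent_children[OF assms(1)]
    using \<open>p \<notin> {c. child x c}\<close> finite_children hit_p by simp
  then show ?thesis unfolding card by (simp add: algebra_simps)
qed

abbreviation srw :: "'a option wstate \<Rightarrow> 'a option wstate pmf" where
  "srw \<equiv> srw_step (T_edges E) tail head (Some v) None"

definition srw_move :: "'a \<times> 'a \<Rightarrow> 'a option wstate" where
  "srw_move e = (if head e = Some v then Ret else if head e = None then Esc else Run (head e))"

lemma srw_step_Some:
  assumes "x \<in> V" "\<not> glued x"
  shows "srw (Run (Some x)) = map_pmf srw_move (pmf_of_set (Pair x ` {y. E x y}))"
proof -
  have "{e \<in> T_edges E. tail e = Some x} = Pair x ` {y. E x y}"
    using assms(2) by (auto simp: T_edges_def T_tail_def glue_eq)
  moreover have "Pair x ` {y. E x y} \<noteq> {}" using exists_neighbor[OF assms(1)] by auto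
  ultimately show ?thesis by (auto simp: srw_step_def Let_def srw_move_def[abs_def])
qed

text \<open>Off the root, \<open>1 - hit_root_prob x\<close> is the probability of reaching the boundary
  before \<open>v\<close>; at the root it is replaced by the mean over the first step.\<close>

fun srw_potential :: "'a option wstate \<Rightarrow> real" where
  "srw_potential Esc = 1"
| "srw_potential Ret = 0"
| "srw_potential (Run None) = 0"
| "srw_potential (Run (Some x)) = (if x = v then root_escape else 1 - hit_root_prob x)"

lemma srw_potential_move:
  assumes "E x y"
  shows "srw_potential (srw_move (x, y)) = 1 - hit_root_prob y"
  using hit_root_prob_glued[OF _ assms] hit_root_prob_root root_not_glued
  by (auto simp: srw_move_def T_head_def glue_eq)

lemma srw_potential_harmonic:
  assumes "x \<in> V" "\<not> glued x"
  shows "measure_pmf.expectation (srw (Run (Some x))) srw_potential = srw_potential (Run (Some x))"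
proof -
  have inj: "inj_on (Pair x) {y. E x y}" by (simp add: inj_on_def)
  have "measure_pmf.expectation (srw (Run (Some x))) srw_potential
      = (\<Sum>y\<in>{y. E x y}. 1 - hit_root_prob y) / card {y. E x y}"
    using exists_neighbor[OF assms(1)] finite_neighbors
    by (simp add: srw_step_Some[OF assms] integral_pmf_of_set sum.reindex[OF inj] card_image[OF inj]
        srw_potential_move)
  also have "\<dots> = srw_potential (Run (Some x))"
  proof (cases "x = v")
    case True
    have "1 - hit_root_prob y = subtree_escape y" if "E v y" for y
      using hit_root_prob_child[OF root_child[OF that]] hit_root_prob_root by simp
    then show ?thesis using True by (simp add: root_escape_def)
  next
    case False
    then obtain p where "child p x" using exists_parent assms(1) by blast
    then show ?thesis
      using sum_neighbors_hit_root_prob assms(2) False exists_neighbor[OF assms(1)] finite_neighbors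
      by (simp add: card_gt_0_iff)
  qed
  finally show ?thesis .
qed

lemma srw_escape_le_root_escape:
  "srw_escape (T_edges E) tail head (glue E v v) None \<le> root_escape"
proof -
  let ?I = "\<lambda>t. \<exists>x. t = Some x \<and> x \<in> V \<and> \<not> glued x"
  have "escape_prob srw (Some v) \<le> srw_potential (Run (Some v))"
  proof (rule escape_prob_le_superharmonic[where I = ?I])
    fix s t assume "?I s" "Run t \<in> set_pmf (srw (Run s))"
    then show "?I t"
      using srw_step_Some exists_neighbor finite_neighbors edgeD
      by (auto simp: set_pmf_of_set srw_move_def T_head_def glue_eq split: if_splits)
  next
    fix s assume "?I s"
    then show "finite (set_pmf (srw (Run s)))" "0 \<le> srw_potential (Run s)"
      "measure_pmf.expectation (srw (Run s)) srw_potential \<le> srw_potential (Run s)"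
      using srw_step_Some exists_neighbor finite_neighbors srw_potential_harmonic
        root_escape_nonneg hit_root_prob_bounds
      by (auto simp: set_pmf_of_set)
  qed (use root_in_V root_not_glued in \<open>auto simp: srw_step_def\<close>)
  then show ?thesis by (simp add: srw_escape_def glue_eq root_not_glued)
qed

end

section \<open>States of the loop contracting random walk\<close>

context rooted_tree
begin

abbreviation lcrw ::
  "(('a \<times> 'a) set \<times> ('a option \<Rightarrow> 'a option set) \<times> 'a option set list) wstate \<Rightarrow>
   (('a \<times> 'a) set \<times> ('a option \<Rightarrow> 'a option set) \<times> 'a option set list) wstate pmf" where
  "lcrw \<equiv> lcrw_step (T_edges E) tail head (Some v) None"

definition out_edges :: "('a \<times> 'a) set \<Rightarrow> ('a option \<Rightarrow> 'a option set) \<Rightarrow> 'a option set list \<Rightarrow>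
    ('a \<times> 'a) set" where
  "out_edges R blk P = {e \<in> R. blk (tail e) = last P}"

definition lcrw_move where
  "lcrw_move R blk P e = (let h = blk (head e) in
     if h = {Some v} then Ret
     else if h = {None} then Esc
     else if h \<in> set P then
       (let C = set (dropWhile (\<lambda>b. b \<noteq> h) P); vC = \<Union>C
        in Run ({e' \<in> R. \<not> (blk (tail e') \<in> C \<and> blk (head e') \<in> C)},
                (\<lambda>x. if blk x \<in> C then vC else blk x),
                takeWhile (\<lambda>b. b \<noteq> h) P @ [vC]))
     else Run (R, blk, P @ [h]))"

lemma lcrw_Run: "out_edges R blk P \<noteq> {} \<Longrightarrow>
    lcrw (Run (R, blk, P)) = map_pmf (lcrw_move R blk P) (pmf_of_set (out_edges R blk P))"
  unfolding lcrw_step_def out_edges_def lcrw_move_def[abs_def] by (auto simp: Let_def)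

definition edge_weight :: "'a \<times> 'a \<Rightarrow> real" where
  "edge_weight e = (if child (fst e) (snd e) then subtree_escape (snd e) else 0)"

definition block_weight ::
  "('a \<times> 'a) set \<Rightarrow> ('a option \<Rightarrow> 'a option set) \<Rightarrow> 'a option set \<Rightarrow> real" where
  "block_weight R blk B = (\<Sum>e\<in>{e \<in> R. blk (tail e) = B}. edge_weight e)"

lemma edge_weight_nonneg: "0 \<le> edge_weight e"
  by (simp add: edge_weight_def subtree_escape_bounds)

lemma block_weight_nonneg: "0 \<le> block_weight R blk B"
  by (simp add: block_weight_def sum_nonneg edge_weight_nonneg)

text \<open>The block \<open>B\<close> following \<open>Bp\<close> on the path is the vertex set of a subtree whose root \<open>r\<close>
  is a child of a vertex of \<open>Bp\<close>; the weight inequality survives contractions and makes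
  the potential below a submartingale.\<close>

definition block_rooted ::
  "('a \<times> 'a) set \<Rightarrow> ('a option \<Rightarrow> 'a option set) \<Rightarrow> 'a option set \<Rightarrow> 'a option set \<Rightarrow> bool" where
  "block_rooted R blk Bp B \<longleftrightarrow> (\<exists>r. Some r \<in> B \<and> (\<exists>a. child a r \<and> Some a \<in> Bp) \<and>
     (\<forall>x. Some x \<in> B \<longrightarrow> x \<noteq> r \<longrightarrow> (\<exists>a. child a x \<and> Some a \<in> B)) \<and>
     subtree_escape r \<le> block_weight R blk B)"

definition path_factor ::
  "('a \<times> 'a) set \<Rightarrow> ('a option \<Rightarrow> 'a option set) \<Rightarrow> 'a option set list \<Rightarrow> real" where
  "path_factor R blk Bs = (\<Prod>B\<leftarrow>Bs. 1 - odds_prob (block_weight R blk B))"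

lemma path_factor_bounds: "0 \<le> path_factor R blk Bs \<and> path_factor R blk Bs \<le> 1"
  unfolding path_factor_def
  by (rule prod_list_unit_interval) (use odds_prob_bounds[OF block_weight_nonneg] in fastforce)

fun lcrw_potential ::
  "(('a \<times> 'a) set \<times> ('a option \<Rightarrow> 'a option set) \<times> 'a option set list) wstate \<Rightarrow> real" where
  "lcrw_potential Esc = 1"
| "lcrw_potential Ret = 0"
| "lcrw_potential (Run (R, blk, P)) =
     (if tl P = [] then root_escape else 1 - path_factor R blk (tl P))"

definition lcrw_rank ::
  "('a \<times> 'a) set \<times> ('a option \<Rightarrow> 'a option set) \<times> 'a option set list \<Rightarrow> nat" where
  "lcrw_rank s = (case s of (R, blk, P) \<Rightarrow> card R + card (Some ` V - \<Union>(set P)))"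

lemma finite_T_edges: "finite (T_edges E)"
  by (rule finite_subset[of _ "V \<times> V"]) (auto simp: T_edges_def finite_V dest: edgeD)

end

locale lcrw_state = rooted_tree +
  fixes R :: "('a \<times> 'a) set" and blk :: "'a option \<Rightarrow> 'a option set" and P :: "'a option set list"
  assumes path_nonempty: "P \<noteq> []"
    and hd_path: "hd P = {Some v}"
    and distinct_path: "distinct P"
    and block_subset: "B \<in> set P \<Longrightarrow> B \<noteq> {} \<and> B \<subseteq> Some ` {x \<in> V. \<not> glued x}"
    and blocks_disjoint: "B1 \<in> set P \<Longrightarrow> B2 \<in> set P \<Longrightarrow> B1 \<noteq> B2 \<Longrightarrow> B1 \<inter> B2 = {}"
    and blk_block: "B \<in> set P \<Longrightarrow> t \<in> B \<Longrightarrow> blk t = B"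
    and blk_outside: "t \<notin> \<Union>(set P) \<Longrightarrow> blk t = {t}"
    and remaining_edges: "R = {e \<in> T_edges E. \<not> (\<exists>B\<in>set P. tail e \<in> B \<and> head e \<in> B)}"
    and rooted_blocks: "successively (block_rooted R blk) P"
begin

lemma R_subset: "R \<subseteq> T_edges E"
  using remaining_edges by blast

lemma remaining_edge_crosses: "e \<in> R \<Longrightarrow> B \<in> set P \<Longrightarrow> tail e \<in> B \<Longrightarrow> head e \<notin> B"
  by (subst (asm) remaining_edges) blast

lemma finite_R: "finite R"
  using R_subset finite_T_edges finite_subset by blast

lemma blk_eq_iff:
  assumes "B \<in> set P"
  shows "blk t = B \<longleftrightarrow> t \<in> B"
proof
  assume "blk t = B"
  show "t \<in> B"
  proof (cases "t \<in> \<Union>(set P)")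
    case True
    then obtain B' where "B' \<in> set P" "t \<in> B'" by blast
    then show ?thesis using blk_block \<open>blk t = B\<close> by auto
  next
    case False
    then show ?thesis using blk_outside \<open>blk t = B\<close> by auto
  qed
qed (use assms blk_block in auto)

lemma root_block: "{Some v} \<in> set P"
  using hd_path path_nonempty hd_in_set by metis

lemma last_in_path: "last P \<in> set P"
  using path_nonempty by simp

lemma Some_in_block: "B \<in> set P \<Longrightarrow> Some x \<in> B \<Longrightarrow> x \<in> V \<and> \<not> glued x"
  using block_subset by blast

lemma None_notin_block: "B \<in> set P \<Longrightarrow> None \<notin> B"
  using block_subset by blast

lemma tail_in_block: "B \<in> set P \<Longrightarrow> tail e \<in> B \<Longrightarrow> tail e = Some (fst e)"
  using None_notin_block by (cases "tail e") (auto simp: tail_eq_Some)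

lemma head_in_block: "B \<in> set P \<Longrightarrow> head e \<in> B \<Longrightarrow> head e = Some (snd e)"
  using None_notin_block by (cases "head e") (auto simp: head_eq_Some)

lemma fst_in_block: "X \<in> set P \<Longrightarrow> tail e \<in> X \<Longrightarrow> Some (fst e) \<in> X"
  by (metis tail_in_block)

lemma snd_in_block: "X \<in> set P \<Longrightarrow> head e \<in> X \<Longrightarrow> Some (snd e) \<in> X"
  by (metis head_in_block)

lemma block_weight_eq: "X \<in> set P \<Longrightarrow> block_weight R blk X = sum edge_weight {e \<in> R. tail e \<in> X}"
  using blk_eq_iff by (simp add: block_weight_def)

lemma block_rooted_nth: "Suc i < length P \<Longrightarrow> block_rooted R blk (P ! i) (P ! Suc i)"
  using rooted_blocks successively_nth by blast

lemma out_edgeD: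
  assumes "e \<in> out_edges R blk P"
  shows "e \<in> R" "E (fst e) (snd e)" "tail e = Some (fst e)" "Some (fst e) \<in> last P"
proof -
  show "e \<in> R" using assms by (simp add: out_edges_def)
  then have "e \<in> T_edges E" using R_subset by blast
  then show "E (fst e) (snd e)" by (simp add: T_edges_def case_prod_beta)
  have "tail e \<in> last P" using assms blk_eq_iff[OF last_in_path] by (simp add: out_edges_def)
  then show "tail e = Some (fst e)" "Some (fst e) \<in> last P"
    using tail_in_block[OF last_in_path] by auto
qed

lemma child_out_edge_leaves_path:
  assumes e: "e \<in> out_edges R blk P" and c: "child (fst e) (snd e)"
  shows "Some (snd e) \<notin> \<Union>(set P)"
proof
  assume "Some (snd e) \<in> \<Union>(set P)"
  then obtain j where j: "j < length P" "Some (snd e) \<in> P ! j" by (auto simp: in_set_conv_nth)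
  note out = out_edgeD[OF e]
  show False
  proof (cases j)
    case 0
    then show False using j hd_path path_nonempty child_not_root[OF c] by (simp add: hd_conv_nth)
  next
    case (Suc i)
    then obtain r where r: "Some r \<in> P ! j" "\<exists>a. child a r \<and> Some a \<in> P ! i"
      "\<forall>x. Some x \<in> P ! j \<longrightarrow> x \<noteq> r \<longrightarrow> (\<exists>a. child a x \<and> Some a \<in> P ! j)"
      using block_rooted_nth[of i] j by (auto simp: block_rooted_def)
    have in_P: "P ! i \<in> set P" "P ! j \<in> set P" using j Suc by simp_all
    show False
    proof (cases "snd e = r")
      case True
      then have "Some (fst e) \<in> P ! i" using r(2) child_unique c by blast
      then have "P ! i = last P" using out(4) blocks_disjoint[OF in_P(1) last_in_path] by blast
      then show False
        using j Suc distinct_path path_nonempty by (simp add: last_conv_nth nth_eq_iff_index_eq)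
    next
      case False
      then have "Some (fst e) \<in> P ! j" using r(3) j(2) child_unique c by blast
      then have "P ! j = last P" using out(4) blocks_disjoint[OF in_P(2) last_in_path] by blast
      moreover have "head e = Some (snd e)"
        using Some_in_block[OF in_P(2) j(2)] by (simp add: head_eq_Some)
      ultimately show False
        using remaining_edge_crosses[OF out(1) in_P(2)] out(3,4) j(2) by simp
    qed
  qed
qed

lemma parent_out_edge:
  assumes e: "e \<in> out_edges R blk P" and c: "child (snd e) (fst e)"
    and P: "P = pre @ [Bp, B]" and r: "Some r \<in> B" "child a r"
    and sub: "\<forall>x. Some x \<in> B \<longrightarrow> x \<noteq> r \<longrightarrow> (\<exists>a. child a x \<and> Some a \<in> B)"
  shows "fst e = r" "snd e = a"
proof -
  note out = out_edgeD[OF e]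
  have B: "B \<in> set P" "last P = B" using P by simp_all
  show "fst e = r"
  proof (rule ccontr)
    assume "fst e \<noteq> r"
    then have "Some (snd e) \<in> B" using sub out(4) B(2) child_unique c by blast
    moreover have "head e = Some (snd e)" using parent_not_glued[OF c] by (simp add: head_eq_Some)
    ultimately show False using remaining_edge_crosses[OF out(1) B(1)] out(3,4) B(2) by simp
  qed
  then show "snd e = a" using child_unique c r(2) by blast
qed

lemma parent_out_edge_path:
  assumes e: "e \<in> out_edges R blk P" and c: "child (snd e) (fst e)"
  obtains pre Bp B where "P = pre @ [Bp, B]"
proof -
  have "tl P \<noteq> []"
  proof
    assume "tl P = []"
    then have "P = [{Some v}]" using path_nonempty hd_path by (cases P) auto
    then show False using out_edgeD(4)[OF e] child_not_root[OF c] by simp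
  qed
  then obtain pre Bp B where "P = pre @ [Bp, B]"
    by (metis append_butlast_last_id butlast.simps(2) list.collapse path_nonempty
        append.assoc append_Cons append_Nil)
  then show ?thesis using that by blast
qed

lemma move_to_glued:
  assumes "glued (snd e)"
  shows "lcrw_move R blk P e = Esc"
proof -
  have "head e = None" using assms by (simp add: T_head_def glue_eq)
  moreover have "blk None = {None}" using blk_outside None_notin_block by blast
  ultimately show ?thesis by (simp add: lcrw_move_def)
qed

lemma move_to_child:
  assumes e: "e \<in> out_edges R blk P" and c: "child (fst e) (snd e)" and "\<not> glued (snd e)"
  shows "lcrw_move R blk P e = Run (R, blk, P @ [{Some (snd e)}])"
proof -
  have "Some (snd e) \<notin> \<Union>(set P)" by (rule child_out_edge_leaves_path[OF e c])
  moreover have "head e = Some (snd e)" using assms by (simp add: head_eq_Some)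
  moreover have "snd e \<noteq> v" using child_not_root[OF c] .
  ultimately show ?thesis using blk_outside by (auto simp: lcrw_move_def Let_def)
qed

lemma move_to_root:
  assumes e: "e \<in> out_edges R blk P" and c: "child (snd e) (fst e)" and P: "P = [Bp, B]"
  shows "lcrw_move R blk P e = Ret"
proof -
  obtain r a where "Some r \<in> B" "child a r" "Some a \<in> Bp"
      "\<forall>x. Some x \<in> B \<longrightarrow> x \<noteq> r \<longrightarrow> (\<exists>a. child a x \<and> Some a \<in> B)"
    using rooted_blocks P by (auto simp: block_rooted_def)
  moreover have "Bp = {Some v}" using hd_path P by simp
  ultimately have "snd e = v" using parent_out_edge[OF e c, of "[]"] P by auto
  then have "head e = Some v" by (simp add: head_eq_Some root_not_glued)
  moreover have "blk (Some v) = {Some v}" using blk_block root_block by blast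
  ultimately show ?thesis by (simp add: lcrw_move_def)
qed

lemma block_weight_fresh:
  assumes "\<not> glued y" and "Some y \<notin> \<Union>(set P)"
  shows "block_weight R blk {Some y} = (\<Sum>c\<in>{c. child y c}. subtree_escape c)"
proof -
  have "blk t = {Some y} \<longleftrightarrow> t = Some y" for t
    using assms(2) blk_outside blk_block by (cases "t \<in> \<Union>(set P)") fastforce+
  then have "{e \<in> R. blk (tail e) = {Some y}} = Pair y ` {z. E y z}"
    using assms remaining_edges by (auto simp: tail_eq_Some T_edges_def T_tail_def glue_eq)
  moreover have "inj_on (Pair y) {z. E y z}" by (simp add: inj_on_def)
  ultimately have "block_weight R blk {Some y} = (\<Sum>z\<in>{z. E y z}. edge_weight (y, z))"
    by (simp add: block_weight_def sum.reindex)
  also have "\<dots> = (\<Sum>z\<in>{z. E y z}. if child y z then subtree_escape z else 0)"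
    by (rule sum.cong) (simp_all add: edge_weight_def)
  also have "\<dots> = (\<Sum>z\<in>{z \<in> {z. E y z}. child y z}. subtree_escape z)"
    by (rule sum.inter_filter[symmetric, OF finite_neighbors])
  also have "{z \<in> {z. E y z}. child y z} = {c. child y c}" using child_edge by blast
  finally show ?thesis .
qed

lemma lcrw_state_extend:
  assumes y: "y \<in> V" "\<not> glued y" "Some y \<notin> \<Union>(set P)"
    and x: "child x y" "Some x \<in> last P"
  shows "lcrw_state V E v R blk (P @ [{Some y}])"
proof -
  have "subtree_escape y \<le> block_weight R blk {Some y}"
    using subtree_escape_eq[OF y(1)] y odds_prob_le_self[OF children_escape_nonneg]
    by (simp add: block_weight_fresh)
  then have rooted: "block_rooted R blk (last P) {Some y}"
    using x by (auto simp: block_rooted_def)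
  have no_loop: "\<not> (tail e \<in> {Some y} \<and> head e \<in> {Some y})" if "e \<in> T_edges E" for e
    using that edgeD by (auto simp: T_edges_def tail_eq_Some head_eq_Some)
  show ?thesis
  proof (intro lcrw_state.intro lcrw_state_axioms.intro; unfold_locales?)
    show "P @ [{Some y}] \<noteq> []" "hd (P @ [{Some y}]) = {Some v}" "distinct (P @ [{Some y}])"
      using hd_path path_nonempty distinct_path y(3) by auto
    show "B \<noteq> {} \<and> B \<subseteq> Some ` {x \<in> V. \<not> glued x}" if "B \<in> set (P @ [{Some y}])" for B
      using that block_subset y(1,2) by auto
    show "B1 \<inter> B2 = {}" if "B1 \<in> set (P @ [{Some y}])" "B2 \<in> set (P @ [{Some y}])" "B1 \<noteq> B2"
      for B1 B2
      using that blocks_disjoint y(3) by auto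
    show "blk t = B" if "B \<in> set (P @ [{Some y}])" "t \<in> B" for B t
      using that blk_block blk_outside y(3) by auto
    show "blk t = {t}" if "t \<notin> \<Union>(set (P @ [{Some y}]))" for t
      using that blk_outside by auto
    show "R = {e \<in> T_edges E. \<not> (\<exists>B\<in>set (P @ [{Some y}]). tail e \<in> B \<and> head e \<in> B)}"
      by (rule trans[OF remaining_edges]) (use no_loop in auto)
    show "successively (block_rooted R blk) (P @ [{Some y}])"
      using rooted_blocks rooted path_nonempty by (simp add: successively_append_iff)
  qed
qed

lemma lcrw_rank_extend:
  assumes "y \<in> V" "Some y \<notin> \<Union>(set P)"
  shows "lcrw_rank (R, blk, P @ [{Some y}]) < lcrw_rank (R, blk, P)"
proof -
  have "Some ` V - \<Union>(set (P @ [{Some y}])) = (Some ` V - \<Union>(set P)) - {Some y}" by auto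
  moreover have "card ((Some ` V - \<Union>(set P)) - {Some y}) < card (Some ` V - \<Union>(set P))"
    using assms finite_V by (intro card_Diff1_less) auto
  ultimately show ?thesis by (simp add: lcrw_rank_def)
qed

end

section \<open>Contracting a loop\<close>

lemma sum_filter_split:
  "finite A \<Longrightarrow> sum f {x \<in> A. P x} = sum f {x \<in> A. P x \<and> Q x} + sum f {x \<in> A. P x \<and> \<not> Q x}"
  by (subst sum.union_disjoint[symmetric]) (auto intro: sum.cong)

text \<open>A step from the root of the last block \<open>B\<close> to its parent in \<open>Bp\<close> closes a loop
  that is contracted when \<open>Bp\<close> is not the starting block.\<close>

locale lcrw_contraction = lcrw_state +
  fixes pre :: "'a option set list" and Bp B :: "'a option set"
  assumes path_split: "P = pre @ [Bp, B]" and pre_nonempty: "pre \<noteq> []"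
begin

definition contracted_edges :: "('a \<times> 'a) set" where
  "contracted_edges = {e \<in> R. \<not> (blk (tail e) \<in> {Bp, B} \<and> blk (head e) \<in> {Bp, B})}"

definition contracted_blk :: "'a option \<Rightarrow> 'a option set" where
  "contracted_blk t = (if blk t \<in> {Bp, B} then Bp \<union> B else blk t)"

lemma pair_in_path: "Bp \<in> set P" "B \<in> set P" "last P = B"
  using path_split by simp_all

lemma pre_in_path: "X \<in> set pre \<Longrightarrow> X \<in> set P"
  using path_split by simp

lemma pair_notin_pre: "Bp \<notin> set pre" "B \<notin> set pre" "Bp \<noteq> B"
  using distinct_path path_split by auto

lemma pair_disjoint: "Bp \<inter> B = {}"
  using blocks_disjoint pair_in_path pair_notin_pre(3) by blast

lemma pre_disjoint_pair: "X \<in> set pre \<Longrightarrow> X \<inter> (Bp \<union> B) = {}"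
  using blocks_disjoint pre_in_path pair_in_path pair_notin_pre by blast

lemma blk_in_pair: "blk t \<in> {Bp, B} \<longleftrightarrow> t \<in> Bp \<union> B"
  using blk_eq_iff pair_in_path by blast

lemma merged_notin_pre: "Bp \<union> B \<notin> set pre"
  using pre_disjoint_pair block_subset pair_in_path by blast

lemma contracted_blk_merged: "contracted_blk t = Bp \<union> B \<longleftrightarrow> t \<in> Bp \<union> B"
proof (cases "t \<in> Bp \<union> B")
  case False
  have "blk t \<noteq> Bp \<union> B"
  proof
    assume eq: "blk t = Bp \<union> B"
    show False
    proof (cases "t \<in> \<Union>(set P)")
      case True
      then obtain X where "X \<in> set P" "t \<in> X" by blast
      then show False using eq blk_block False by auto
    next
      case False
      then have "Bp \<union> B = {t}" using eq blk_outside by simp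
      then show False using pair_notin_pre(3) block_subset pair_in_path
        by (auto simp: Un_singleton_iff)
    qed
  qed
  then show ?thesis using False blk_in_pair by (simp add: contracted_blk_def)
qed (use blk_in_pair in \<open>auto simp: contracted_blk_def\<close>)

lemma contracted_blk_pre: "X \<in> set pre \<Longrightarrow> contracted_blk t = X \<longleftrightarrow> blk t = X"
  using merged_notin_pre pair_notin_pre by (auto simp: contracted_blk_def)

lemma root_of_last_block:
  obtains r a where "Some r \<in> B" "child a r" "Some a \<in> Bp"
    "\<forall>x. Some x \<in> B \<longrightarrow> x \<noteq> r \<longrightarrow> (\<exists>a. child a x \<and> Some a \<in> B)"
    "subtree_escape r \<le> block_weight R blk B"
  using rooted_blocks path_split by (auto simp: block_rooted_def successively_append_iff)

lemma root_of_previous_block: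
  obtains r a where "Some r \<in> Bp" "child a r" "Some a \<in> last pre"
    "\<forall>x. Some x \<in> Bp \<longrightarrow> x \<noteq> r \<longrightarrow> (\<exists>a. child a x \<and> Some a \<in> Bp)"
    "subtree_escape r \<le> block_weight R blk Bp"
  using rooted_blocks path_split pre_nonempty
  by (auto simp: block_rooted_def successively_append_iff)

lemma parent_edge_blocks:
  assumes e: "e \<in> out_edges R blk P" and c: "child (snd e) (fst e)"
  shows "blk (head e) = Bp" "blk (tail e) = B"
proof -
  obtain r a where ra: "Some r \<in> B" "child a r" "Some a \<in> Bp"
    "\<forall>x. Some x \<in> B \<longrightarrow> x \<noteq> r \<longrightarrow> (\<exists>a. child a x \<and> Some a \<in> B)"
    by (rule root_of_last_block)
  have "snd e = a" using parent_out_edge[OF e c path_split ra(1,2,4)] by simp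
  then have "head e = Some a" using parent_not_glued[OF ra(2)] by (simp add: head_eq_Some)
  then show "blk (head e) = Bp" using blk_block pair_in_path(1) ra(3) by simp
  show "blk (tail e) = B" using e pair_in_path(3) by (simp add: out_edges_def)
qed

lemma contraction_move:
  assumes e: "e \<in> out_edges R blk P" and c: "child (snd e) (fst e)"
  shows "lcrw_move R blk P e = Run (contracted_edges, contracted_blk, pre @ [Bp \<union> B])"
proof -
  have "blk (head e) = Bp" by (rule parent_edge_blocks[OF e c])
  moreover have "(Bp = {Some v}) = False"
    using hd_path path_split pre_nonempty pair_notin_pre(1) hd_in_set by fastforce
  moreover have "(Bp = {None}) = False" using None_notin_block pair_in_path(1) by blast
  moreover have "(Bp \<in> set P) = True" using pair_in_path(1) by simp
  moreover have "set (dropWhile (\<lambda>X. X \<noteq> Bp) P) = {Bp, B}"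
    and "takeWhile (\<lambda>X. X \<noteq> Bp) P = pre" and "\<Union>{Bp, B} = Bp \<union> B"
    using path_split pair_notin_pre(1) by (auto simp: dropWhile_append takeWhile_append)
  ultimately show ?thesis
    unfolding lcrw_move_def Let_def contracted_edges_def contracted_blk_def[abs_def]
    by (simp only: if_False if_True)
qed

lemma block_weight_contracted_pre:
  assumes "X \<in> set pre"
  shows "block_weight contracted_edges contracted_blk X = block_weight R blk X"
proof -
  have "{e \<in> contracted_edges. contracted_blk (tail e) = X} = {e \<in> R. blk (tail e) = X}"
    using contracted_blk_pre[OF assms] pair_notin_pre assms by (auto simp: contracted_edges_def)
  then show ?thesis by (simp add: block_weight_def)
qed

text \<open>Of the edges from \<open>Bp\<close> into \<open>B\<close>, only the one onto the root of \<open>B\<close> has weight.\<close>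

lemma weight_into_last_block:
  assumes r: "Some r \<in> B" "child a r" "Some a \<in> Bp"
    and sub: "\<forall>x. Some x \<in> B \<longrightarrow> x \<noteq> r \<longrightarrow> (\<exists>a. child a x \<and> Some a \<in> B)"
  shows "sum edge_weight {e \<in> R. tail e \<in> Bp \<and> head e \<in> B} \<le> subtree_escape r"
proof -
  let ?X = "{e \<in> R. tail e \<in> Bp \<and> head e \<in> B}"
  have "edge_weight e = 0" if e: "e \<in> ?X" "e \<noteq> (a, r)" for e
  proof (rule ccontr)
    assume "edge_weight e \<noteq> 0"
    then have c: "child (fst e) (snd e)" by (simp add: edge_weight_def split: if_splits)
    have "Some (fst e) \<in> Bp" "Some (snd e) \<in> B"
      using fst_in_block[OF pair_in_path(1)] snd_in_block[OF pair_in_path(2)] e(1) by auto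
    moreover have "snd e \<noteq> r" using e(2) child_unique[OF c] r(2) by (cases e) auto
    ultimately show False using sub child_unique[OF c] pair_disjoint by blast
  qed
  then have "sum edge_weight ?X = sum edge_weight (?X \<inter> {(a, r)})"
    using finite_R by (intro sum.mono_neutral_right) auto
  also have "\<dots> \<le> sum edge_weight {(a, r)}"
    by (rule sum_mono2) (auto simp: edge_weight_nonneg)
  also have "\<dots> = subtree_escape r" using r(2) by (simp add: edge_weight_def)
  finally show ?thesis .
qed

lemma weight_into_previous_block: "sum edge_weight {e \<in> R. tail e \<in> B \<and> head e \<in> Bp} = 0"
proof (rule sum.neutral, rule ballI, rule ccontr)
  fix e assume e: "e \<in> {e \<in> R. tail e \<in> B \<and> head e \<in> Bp}" and "edge_weight e \<noteq> 0"
  then have c: "child (fst e) (snd e)" by (simp add: edge_weight_def split: if_splits)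
  have in_blocks: "Some (fst e) \<in> B" "Some (snd e) \<in> Bp"
    using fst_in_block[OF pair_in_path(2)] snd_in_block[OF pair_in_path(1)] e by auto
  obtain r a where r: "Some r \<in> Bp" "child a r" "Some a \<in> last pre"
      "\<forall>x. Some x \<in> Bp \<longrightarrow> x \<noteq> r \<longrightarrow> (\<exists>a. child a x \<and> Some a \<in> Bp)"
    by (rule root_of_previous_block)
  show False
  proof (cases "snd e = r")
    case True
    then have "Some (fst e) \<in> last pre" using child_unique[OF c] r(2,3) by simp
    then show False using pre_disjoint_pair[of "last pre"] pre_nonempty in_blocks(1) by auto
  next
    case False
    then show False using r(4) in_blocks child_unique[OF c] pair_disjoint by blast
  qed
qed

lemma block_weight_contracted_merged:
  "block_weight contracted_edges contracted_blk (Bp \<union> B)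
     = sum edge_weight {e \<in> R. tail e \<in> Bp \<union> B \<and> head e \<notin> Bp \<union> B}"
proof -
  have "{e \<in> contracted_edges. contracted_blk (tail e) = Bp \<union> B}
      = {e \<in> R. tail e \<in> Bp \<union> B \<and> head e \<notin> Bp \<union> B}"
    using contracted_blk_merged blk_in_pair by (auto simp: contracted_edges_def)
  then show ?thesis by (simp add: block_weight_def)
qed

text \<open>Merging \<open>Bp\<close> and \<open>B\<close> loses only the edges between them; those from \<open>Bp\<close> into \<open>B\<close>
  weigh at most \<open>subtree_escape r\<close>, which the weight of \<open>B\<close> compensates.\<close>

lemma block_weight_merge:
  "block_weight R blk Bp \<le> block_weight contracted_edges contracted_blk (Bp \<union> B)"
proof -
  obtain r a where r: "Some r \<in> B" "child a r" "Some a \<in> Bp"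
      "\<forall>x. Some x \<in> B \<longrightarrow> x \<noteq> r \<longrightarrow> (\<exists>a. child a x \<and> Some a \<in> B)"
      "subtree_escape r \<le> block_weight R blk B"
    by (rule root_of_last_block)
  define out where "out X = sum edge_weight {e \<in> R. tail e \<in> X \<and> head e \<notin> Bp \<union> B}" for X
  have no_inner: "e \<in> R \<Longrightarrow> tail e \<in> X \<Longrightarrow> head e \<notin> X" if "X \<in> set P" for X e
    using remaining_edge_crosses that by blast
  have "block_weight R blk Bp = out Bp + sum edge_weight {e \<in> R. tail e \<in> Bp \<and> head e \<in> B}"
  proof -
    have "{e \<in> R. tail e \<in> Bp \<and> head e \<in> Bp \<union> B} = {e \<in> R. tail e \<in> Bp \<and> head e \<in> B}"
      using no_inner[OF pair_in_path(1)] by blast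
    with sum_filter_split[OF finite_R, of edge_weight "\<lambda>e. tail e \<in> Bp" "\<lambda>e. head e \<in> Bp \<union> B"]
    show ?thesis by (simp only: block_weight_eq[OF pair_in_path(1)] out_def add.commute)
  qed
  moreover have "block_weight R blk B = out B"
  proof -
    have "{e \<in> R. tail e \<in> B \<and> head e \<in> Bp \<union> B} = {e \<in> R. tail e \<in> B \<and> head e \<in> Bp}"
      using no_inner[OF pair_in_path(2)] by blast
    with sum_filter_split[OF finite_R, of edge_weight "\<lambda>e. tail e \<in> B" "\<lambda>e. head e \<in> Bp \<union> B"]
    show ?thesis
      by (simp only: block_weight_eq[OF pair_in_path(2)] out_def weight_into_previous_block
        add_0)
  qed
  moreover have "block_weight contracted_edges contracted_blk (Bp \<union> B) = out Bp + out B"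
  proof -
    have "{e \<in> R. (tail e \<in> Bp \<union> B \<and> head e \<notin> Bp \<union> B) \<and> tail e \<in> Bp}
        = {e \<in> R. tail e \<in> Bp \<and> head e \<notin> Bp \<union> B}"
      and "{e \<in> R. (tail e \<in> Bp \<union> B \<and> head e \<notin> Bp \<union> B) \<and> \<not> tail e \<in> Bp}
        = {e \<in> R. tail e \<in> B \<and> head e \<notin> Bp \<union> B}"
      using pair_disjoint by blast+
    with sum_filter_split[OF finite_R, of edge_weight "\<lambda>e. tail e \<in> Bp \<union> B \<and> head e \<notin> Bp \<union> B"
        "\<lambda>e. tail e \<in> Bp"]
    show ?thesis by (simp only: block_weight_contracted_merged out_def)
  qed
  ultimately show ?thesis using weight_into_last_block[OF r(1-4)] r(5) by linarith
qed

lemma lcrw_rank_contract: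
  assumes e: "e \<in> out_edges R blk P" and c: "child (snd e) (fst e)"
  shows "lcrw_rank (contracted_edges, contracted_blk, pre @ [Bp \<union> B]) < lcrw_rank (R, blk, P)"
proof -
  have "contracted_edges \<subset> R"
    using out_edgeD(1)[OF e] parent_edge_blocks[OF e c] by (auto simp: contracted_edges_def)
  then have "card contracted_edges < card R" using finite_R by (rule psubset_card_mono[rotated])
  moreover have "\<Union>(set (pre @ [Bp \<union> B])) = \<Union>(set P)" using path_split by auto
  ultimately show ?thesis by (simp add: lcrw_rank_def)
qed

lemma successively_contracted:
  "successively (block_rooted contracted_edges contracted_blk) (pre @ [Bp \<union> B])"
proof -
  have "successively (block_rooted R blk) pre" using rooted_blocks path_split
    by (simp add: successively_append_iff)
  then have "successively (block_rooted contracted_edges contracted_blk) pre"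
    by (rule successively_mono) (simp add: block_rooted_def block_weight_contracted_pre)
  moreover have "block_rooted contracted_edges contracted_blk (last pre) (Bp \<union> B)"
  proof -
    obtain r a where r: "Some r \<in> Bp" "child a r" "Some a \<in> last pre"
        "\<forall>x. Some x \<in> Bp \<longrightarrow> x \<noteq> r \<longrightarrow> (\<exists>a. child a x \<and> Some a \<in> Bp)"
        "subtree_escape r \<le> block_weight R blk Bp"
      by (rule root_of_previous_block)
    obtain r' a' where r': "Some r' \<in> B" "child a' r'" "Some a' \<in> Bp"
        "\<forall>x. Some x \<in> B \<longrightarrow> x \<noteq> r' \<longrightarrow> (\<exists>a. child a x \<and> Some a \<in> B)"
      by (rule root_of_last_block)
    have "\<exists>a. child a x \<and> Some a \<in> Bp \<union> B" if "Some x \<in> Bp \<union> B" "x \<noteq> r" for x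
      using that r(4) r' by (cases "x = r'") blast+
    then show ?thesis
      using r(1-3) order_trans[OF r(5) block_weight_merge] unfolding block_rooted_def by blast
  qed
  ultimately show ?thesis using pre_nonempty by (simp add: successively_append_iff)
qed

lemma contracted_blocks_disjoint:
  assumes "X1 \<in> set (pre @ [Bp \<union> B])" "X2 \<in> set (pre @ [Bp \<union> B])" "X1 \<noteq> X2"
  shows "X1 \<inter> X2 = {}"
proof -
  consider "X1 \<in> set pre" "X2 \<in> set pre" | "X1 = Bp \<union> B" "X2 \<in> set pre"
    | "X1 \<in> set pre" "X2 = Bp \<union> B"
    using assms by auto
  then show ?thesis
    by cases (use blocks_disjoint pre_in_path pre_disjoint_pair assms(3) in blast)+
qed

lemma contracted_edges_eq:
  "contracted_edges = {e \<in> T_edges E. \<not> (\<exists>X\<in>set (pre @ [Bp \<union> B]). tail e \<in> X \<and> head e \<in> X)}"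
proof -
  have eq: "(\<exists>X\<in>set P. tail e \<in> X \<and> head e \<in> X) \<or> (tail e \<in> Bp \<union> B \<and> head e \<in> Bp \<union> B)
      \<longleftrightarrow> (\<exists>X\<in>set (pre @ [Bp \<union> B]). tail e \<in> X \<and> head e \<in> X)" for e
    using path_split by auto
  have "contracted_edges = {e \<in> R. \<not> (tail e \<in> Bp \<union> B \<and> head e \<in> Bp \<union> B)}"
    by (simp only: contracted_edges_def blk_in_pair)
  also have "\<dots> = {e \<in> T_edges E. \<not> (\<exists>X\<in>set (pre @ [Bp \<union> B]). tail e \<in> X \<and> head e \<in> X)}"
    unfolding remaining_edges eq[symmetric] by blast
  finally show ?thesis .
qed

lemma lcrw_state_contract: "lcrw_state V E v contracted_edges contracted_blk (pre @ [Bp \<union> B])"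
proof (intro lcrw_state.intro lcrw_state_axioms.intro; unfold_locales?)
  show "pre @ [Bp \<union> B] \<noteq> []" by simp
  show "hd (pre @ [Bp \<union> B]) = {Some v}" using hd_path path_split pre_nonempty by simp
  show "distinct (pre @ [Bp \<union> B])" using distinct_path path_split merged_notin_pre by simp
  show "X \<noteq> {} \<and> X \<subseteq> Some ` {x \<in> V. \<not> glued x}" if X: "X \<in> set (pre @ [Bp \<union> B])" for X
  proof (cases "X = Bp \<union> B")
    case True
    then show ?thesis
      using block_subset[OF pair_in_path(1)] block_subset[OF pair_in_path(2)] by blast
  next
    case False
    then show ?thesis using X block_subset[OF pre_in_path] by simp
  qed
  show "X1 \<inter> X2 = {}"
    if "X1 \<in> set (pre @ [Bp \<union> B])" "X2 \<in> set (pre @ [Bp \<union> B])" "X1 \<noteq> X2" for X1 X2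
    using that by (rule contracted_blocks_disjoint)
  show "contracted_blk t = X" if X: "X \<in> set (pre @ [Bp \<union> B])" "t \<in> X" for X t
  proof (cases "X = Bp \<union> B")
    case True
    then show ?thesis using X(2) contracted_blk_merged by simp
  next
    case False
    then have "X \<in> set pre" using X(1) by simp
    then show ?thesis using contracted_blk_pre blk_block pre_in_path X(2) by blast
  qed
  show "contracted_blk t = {t}" if t: "t \<notin> \<Union>(set (pre @ [Bp \<union> B]))" for t
  proof -
    have "t \<notin> \<Union>(set P)" "t \<notin> Bp \<union> B" using t path_split by auto
    then have "blk t = {t}" "contracted_blk t = blk t"
      using blk_outside blk_in_pair[of t] unfolding contracted_blk_def by auto
    then show ?thesis by simp
  qed
  show "contracted_edges
      = {e \<in> T_edges E. \<not> (\<exists>X\<in>set (pre @ [Bp \<union> B]). tail e \<in> X \<and> head e \<in> X)}"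
    by (rule contracted_edges_eq)
  show "successively (block_rooted contracted_edges contracted_blk) (pre @ [Bp \<union> B])"
    by (rule successively_contracted)
qed

end

section \<open>The potential is a submartingale\<close>

text \<open>The averaging step of the submartingale argument: with \<open>G = (1 - G) S\<close> for the total
  weight \<open>S\<close>, the loss \<open>A G\<close> on the (at most one) parent edge is paid for by the weights.\<close>

lemma average_lower_bound:
  fixes w f :: "'e \<Rightarrow> real"
  assumes "finite X" "X \<noteq> {}" "card {e \<in> X. p e} \<le> 1" "0 \<le> A" "0 \<le> G"
    and G: "G = (1 - G) * (\<Sum>e\<in>X. w e)"
    and f: "\<And>e. e \<in> X \<Longrightarrow> 1 - A * (1 - G) * (1 - w e) - (if p e then A * G else 0) \<le> f e"
  shows "1 - A * (1 - G) \<le> (\<Sum>e\<in>X. f e) / card X"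
proof -
  have "(\<Sum>e\<in>X. if p e then A * G else 0) = A * G * card {e \<in> X. p e}"
    using sum.inter_filter[OF \<open>finite X\<close>, of "\<lambda>_. A * G" p] by (simp add: ac_simps)
  also have "\<dots> \<le> A * G" using assms(3-5) by (simp add: mult_left_le)
  also have "\<dots> = A * (1 - G) * (\<Sum>e\<in>X. w e)" using G by (simp add: mult.assoc)
  finally have parent: "(\<Sum>e\<in>X. if p e then A * G else 0) \<le> A * (1 - G) * (\<Sum>e\<in>X. w e)" .
  have "(\<Sum>e\<in>X. 1 - A * (1 - G) * (1 - w e)) = (\<Sum>e\<in>X. (1 - A * (1 - G)) + A * (1 - G) * w e)"
    by (rule sum.cong) (simp_all add: algebra_simps)
  then have "card X * (1 - A * (1 - G))
      = (\<Sum>e\<in>X. 1 - A * (1 - G) * (1 - w e)) - A * (1 - G) * (\<Sum>e\<in>X. w e)"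
    by (simp add: sum.distrib sum_distrib_left)
  also have "\<dots> \<le> (\<Sum>e\<in>X. 1 - A * (1 - G) * (1 - w e)) - (\<Sum>e\<in>X. if p e then A * G else 0)"
    using parent by linarith
  also have "\<dots> \<le> (\<Sum>e\<in>X. f e)"
    unfolding sum_subtractf[symmetric] by (rule sum_mono) (use f in auto)
  finally show ?thesis
    using assms(1,2) by (simp add: le_divide_eq card_gt_0_iff mult.commute)
qed

context lcrw_state
begin

lemma finite_out_edges: "finite (out_edges R blk P)"
  using finite_R by (simp add: out_edges_def)

lemma start_out_edges:
  assumes "tl P = []"
  shows "out_edges R blk P = Pair v ` {y. E v y}"
proof -
  have P: "P = [{Some v}]" using assms path_nonempty hd_path by (cases P) auto
  have "\<not> (tail e \<in> X \<and> head e \<in> X)" if "e \<in> T_edges E" "X \<in> set P" for e X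
    using that edgeD by (auto simp: P T_edges_def tail_eq_Some head_eq_Some)
  then have "R = T_edges E" by (subst remaining_edges) blast
  moreover have "blk t = {Some v} \<longleftrightarrow> t = Some v" for t
    using blk_eq_iff root_block by blast
  ultimately have "out_edges R blk P = {e \<in> T_edges E. tail e = Some v}"
    by (simp add: out_edges_def P)
  also have "\<dots> = Pair v ` {y. E v y}"
    using root_not_glued by (auto simp: T_edges_def tail_eq_Some)
  finally show ?thesis .
qed

lemma out_edges_nonempty: "out_edges R blk P \<noteq> {}"
proof (cases "tl P = []")
  case True
  then show ?thesis using start_out_edges exists_neighbor[OF root_in_V] by auto
next
  case False
  then obtain pre Bp B where P: "P = pre @ [Bp, B]"
    by (metis append_butlast_last_id butlast.simps(2) list.collapse path_nonempty
        append.assoc append_Cons append_Nil)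
  then obtain r a where r: "Some r \<in> B" "child a r" "Some a \<in> Bp"
    using rooted_blocks by (auto simp: block_rooted_def successively_append_iff)
  have in_P: "Bp \<in> set P" "B \<in> set P" "Bp \<noteq> B" using P distinct_path by auto
  have heads: "tail (r, a) = Some r" "head (r, a) = Some a"
    using r Some_in_block in_P parent_not_glued[OF r(2)] by (auto simp: tail_eq_Some head_eq_Some)
  have "(r, a) \<in> T_edges E" using child_edge[OF r(2)] edge_sym by (simp add: T_edges_def)
  moreover have "\<not> (\<exists>X\<in>set P. tail (r, a) \<in> X \<and> head (r, a) \<in> X)"
    using heads r blocks_disjoint[of B] in_P by (metis IntI empty_iff option.inject)
  ultimately have "(r, a) \<in> R" by (subst remaining_edges) blast
  moreover have "blk (tail (r, a)) = last P" using heads r(1) blk_block in_P P by simp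
  ultimately show ?thesis by (auto simp: out_edges_def)
qed

lemma lcrw_Run_state:
  "lcrw (Run (R, blk, P)) = map_pmf (lcrw_move R blk P) (pmf_of_set (out_edges R blk P))"
  using lcrw_Run out_edges_nonempty by blast

lemma set_pmf_lcrw: "set_pmf (lcrw (Run (R, blk, P))) = lcrw_move R blk P ` out_edges R blk P"
  using out_edges_nonempty finite_out_edges by (simp add: lcrw_Run_state)

lemma card_parent_out_edges: "card {e \<in> out_edges R blk P. child (snd e) (fst e)} \<le> 1"
proof (cases "\<exists>pre Bp B. P = pre @ [Bp, B]")
  case True
  then obtain pre Bp B where P: "P = pre @ [Bp, B]" by blast
  then obtain r a where r: "Some r \<in> B" "child a r"
      "\<forall>x. Some x \<in> B \<longrightarrow> x \<noteq> r \<longrightarrow> (\<exists>a. child a x \<and> Some a \<in> B)"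
    using rooted_blocks by (auto simp: block_rooted_def successively_append_iff)
  have "{e \<in> out_edges R blk P. child (snd e) (fst e)} \<subseteq> {(r, a)}"
    using parent_out_edge[OF _ _ P r] by (auto simp: prod_eq_iff)
  then show ?thesis using card_mono[of "{(r, a)}"] by fastforce
next
  case False
  then have empty: "{e \<in> out_edges R blk P. child (snd e) (fst e)} = {}"
    using parent_out_edge_path by blast
  show ?thesis unfolding empty by simp
qed

lemma lcrw_successor:
  assumes "Run (R', blk', P') \<in> set_pmf (lcrw (Run (R, blk, P)))"
  shows "lcrw_state V E v R' blk' P' \<and> lcrw_rank (R', blk', P') < lcrw_rank (R, blk, P)"
proof -
  obtain e where e: "e \<in> out_edges R blk P" and move: "lcrw_move R blk P e = Run (R', blk', P')"
    using assms set_pmf_lcrw by auto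
  note out = out_edgeD[OF e]
  consider "child (fst e) (snd e)" | "child (snd e) (fst e)"
    using edge_child_or_parent[OF out(2)] by blast
  then show ?thesis
  proof cases
    case 1
    have "\<not> glued (snd e)"
    proof
      assume "glued (snd e)"
      then have "lcrw_move R blk P e = Esc" by (rule move_to_glued)
      with move show False by simp
    qed
    then show ?thesis
      using move move_to_child[OF e 1] lcrw_state_extend lcrw_rank_extend child_in_V[OF 1]
        child_out_edge_leaves_path[OF e 1] 1 out(4) by auto
  next
    case 2
    then obtain pre Bp B where P: "P = pre @ [Bp, B]" using parent_out_edge_path[OF e] by blast
    then have "pre \<noteq> []" using move move_to_root[OF e 2] by auto
    then interpret lcrw_contraction V E v R blk P pre Bp B
      using P by unfold_locales
    show ?thesis
      using move contraction_move[OF e 2] lcrw_state_contract lcrw_rank_contract[OF e 2] by auto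
  qed
qed

lemma potential_child_move:
  assumes e: "e \<in> out_edges R blk P" and c: "child (fst e) (snd e)"
  shows "lcrw_potential (lcrw_move R blk P e) = 1 - path_factor R blk (tl P) * (1 - edge_weight e)"
proof (cases "glued (snd e)")
  case True
  then show ?thesis using move_to_glued subtree_escape_glued c by (simp add: edge_weight_def)
next
  case False
  have "odds_prob (block_weight R blk {Some (snd e)}) = subtree_escape (snd e)"
    using block_weight_fresh[OF False child_out_edge_leaves_path[OF e c]]
      subtree_escape_eq child_in_V[OF c] False by simp
  then show ?thesis
    using move_to_child[OF e c False] c
    by (simp add: path_nonempty path_factor_def edge_weight_def)
qed

lemma potential_parent_move:
  assumes e: "e \<in> out_edges R blk P" and c: "child (snd e) (fst e)" and P: "P = pre @ [Bp, B]"
  shows "1 - path_factor R blk (tl (pre @ [Bp])) \<le> lcrw_potential (lcrw_move R blk P e)"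
proof (cases "pre = []")
  case True
  then show ?thesis using move_to_root[OF e c] P by (simp add: path_factor_def)
next
  case False
  interpret lcrw_contraction V E v R blk P pre Bp B
    using P False by unfold_locales
  let ?f = "\<lambda>R blk X. 1 - odds_prob (block_weight R blk X)"
  have "path_factor contracted_edges contracted_blk (tl pre) = path_factor R blk (tl pre)"
    unfolding path_factor_def using block_weight_contracted_pre list.set_sel(2)[OF False]
    by (simp cong: map_cong)
  moreover have "?f contracted_edges contracted_blk (Bp \<union> B) \<le> ?f R blk Bp"
    using odds_prob_mono[OF block_weight_nonneg block_weight_merge] by simp
  ultimately have "path_factor contracted_edges contracted_blk (tl pre @ [Bp \<union> B])
      \<le> path_factor R blk (tl pre @ [Bp])"
    using path_factor_bounds[of R blk "tl pre"] by (simp add: path_factor_def mult_left_mono)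
  then show ?thesis
    using contraction_move[OF e c] False by simp
qed

lemma expectation_lcrw:
  "measure_pmf.expectation (lcrw (Run (R, blk, P))) f
     = (\<Sum>e\<in>out_edges R blk P. f (lcrw_move R blk P e)) / card (out_edges R blk P)"
  using out_edges_nonempty finite_out_edges by (simp add: lcrw_Run_state integral_pmf_of_set)

lemma lcrw_potential_start:
  assumes "tl P = []"
  shows "measure_pmf.expectation (lcrw (Run (R, blk, P))) lcrw_potential
    = lcrw_potential (Run (R, blk, P))"
proof -
  have inj: "inj_on (Pair v) {y. E v y}" by (simp add: inj_on_def)
  have "lcrw_potential (lcrw_move R blk P (v, y)) = subtree_escape y" if "E v y" for y
  proof -
    have "(v, y) \<in> out_edges R blk P" using start_out_edges[OF assms] that by simp
    then show ?thesis
      using potential_child_move root_child[OF that] assms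
        by (simp add: path_factor_def edge_weight_def)
  qed
  then show ?thesis
    using assms
      by (simp add: expectation_lcrw start_out_edges sum.reindex[OF inj] card_image[OF inj]
        root_escape_def)
qed

lemma lcrw_potential_submartingale:
  "lcrw_potential (Run (R, blk, P))
    \<le> measure_pmf.expectation (lcrw (Run (R, blk, P))) lcrw_potential"
proof (cases "tl P = []")
  case True
  then show ?thesis using lcrw_potential_start by simp
next
  case False
  then obtain pre Bp B where P: "P = pre @ [Bp, B]"
    by (metis append_butlast_last_id butlast.simps(2) list.collapse path_nonempty
        append.assoc append_Cons append_Nil)
  define A where "A = path_factor R blk (tl (pre @ [Bp]))"
  define G where "G = odds_prob (block_weight R blk B)"
  have tl_P: "tl P = tl (pre @ [Bp]) @ [B]" using P by (cases pre) auto
  then have pf: "path_factor R blk (tl P) = A * (1 - G)" by (simp add: A_def G_def path_factor_def)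
  have weight: "block_weight R blk B = (\<Sum>e\<in>out_edges R blk P. edge_weight e)"
    using P by (simp add: out_edges_def block_weight_def)
  have "G = (1 - G) * block_weight R blk B"
    using block_weight_nonneg[of R blk B] by (simp add: G_def odds_prob_def field_simps)
  moreover have "1 - A * (1 - G) * (1 - edge_weight e)
      - (if child (snd e) (fst e) then A * G else 0) \<le> lcrw_potential (lcrw_move R blk P e)"
    if e: "e \<in> out_edges R blk P" for e
  proof (cases "child (fst e) (snd e)")
    case True
    then show ?thesis using potential_child_move[OF e True] pf child_asym by simp
  next
    case False
    then have "child (snd e) (fst e)" using edge_child_or_parent out_edgeD(2)[OF e] by blast
    then show ?thesis
      using potential_parent_move[OF e _ P] False by (simp add: A_def edge_weight_def algebra_simps)
  qed
  moreover have "0 \<le> A" "0 \<le> G"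
    using path_factor_bounds odds_prob_bounds[OF block_weight_nonneg] by (simp_all add: A_def G_def)
  ultimately have
    "1 - A * (1 - G) \<le> measure_pmf.expectation (lcrw (Run (R, blk, P))) lcrw_potential"
    unfolding expectation_lcrw weight
    by (intro average_lower_bound[where w = edge_weight and p = "\<lambda>e. child (snd e) (fst e)"])
      (use finite_out_edges out_edges_nonempty card_parent_out_edges in simp_all)
  then show ?thesis using False pf by simp
qed

end

context rooted_tree
begin

lemma lcrw_state_start: "lcrw_state V E v (T_edges E) (\<lambda>x. {x}) [{Some v}]"
proof -
  have "\<not> (tail e \<in> {Some v} \<and> head e \<in> {Some v})" if "e \<in> T_edges E" for e
    using that edgeD by (auto simp: T_edges_def tail_eq_Some head_eq_Some)
  then show ?thesis
    using root_in_V root_not_glued by unfold_locales auto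
qed

lemma root_escape_le_lcrw_escape:
  "root_escape \<le> lcrw_escape (T_edges E) tail head (glue E v v) None"
proof -
  let ?I = "\<lambda>(R, blk, P). lcrw_state V E v R blk P"
  let ?s0 = "(T_edges E, \<lambda>x. {x}, [{Some v}])"
  have "lcrw_potential (Run ?s0) \<le> escape_prob lcrw ?s0"
  proof (rule escape_prob_ge_subharmonic[where I = ?I and steps_left = lcrw_rank])
    fix s t assume I: "?I s" and t: "Run t \<in> set_pmf (lcrw (Run s))"
    obtain R blk P R' blk' P' where s: "s = (R, blk, P)" and t': "t = (R', blk', P')"
      by (cases s; cases t)
    interpret lcrw_state V E v R blk P using I s by simp
    show "?I t \<and> lcrw_rank t < lcrw_rank s" using lcrw_successor t s t' by simp
  next
    fix s assume I: "?I s"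
    obtain R blk P where s: "s = (R, blk, P)" by (cases s)
    interpret lcrw_state V E v R blk P using I s by simp
    show "finite (set_pmf (lcrw (Run s)))"
      "lcrw_potential (Run s) \<le> measure_pmf.expectation (lcrw (Run s)) lcrw_potential"
      using set_pmf_lcrw finite_out_edges lcrw_potential_submartingale s by simp_all
  qed (use lcrw_state_start in \<open>simp_all add: lcrw_step_def\<close>)
  then show ?thesis by (simp add: lcrw_escape_def glue_eq root_not_glued)
qed

end

theorem mainTheorem7:
  fixes V :: "'a set" and E :: "'a \<Rightarrow> 'a \<Rightarrow> bool" and v :: 'a
  assumes "finite_tree V E" and "v \<in> V" and "2 \<le> card V"
  shows "lcrw_escape (T_edges E) (T_tail E v) (T_head E v) (glue E v v) None
           \<ge> srw_escape (T_edges E) (T_tail E v) (T_head E v) (glue E v v) None"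
proof -
  interpret rooted_tree V E v using assms by unfold_locales
  show ?thesis using srw_escape_le_root_escape root_escape_le_lcrw_escape by linarith
qed

end
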